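(* Let $M$ be a finite matroid having at least one circuit, and let $\ell$ be the size of its largest circuit. Then $\mathrm{bd}(M)\le\ell^2$.
   Context: For a rooted tree $T$, $\|T\|$ is its number of edges and its depth is the number of edges of a longest root-to-leaf path. A depth-decomposition of a finite matroid $M$ (rank function $r$) is a pair $(T,f)$ with $T$ a rooted tree and $f:M\to V(T)$ such that (1) $r(M)=\|T\|$ and (2) $r(X)\le\|T^*(X)\|$ for every $X\subseteq M$, where $T^*(X)$ is the union of the paths from the root to all vertices of $f(X)$. The branch-depth $\mathrm{bd}(M)$ is the minimum depth of $T$ over all depth-decompositions $(T,f)$ of $M$. *)

theory Defs
  imports Main
begin

definition matroid :: "'a set \<Rightarrow> ('a set \<Rightarrow> bool) \<Rightarrow> bool" where
  "matroid E indep \<longleftrightarrow>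
     finite E \<and> indep {} \<and>
     (\<forall>X. indep X \<longrightarrow> X \<subseteq> E) \<and>
     (\<forall>X Y. indep Y \<and> X \<subseteq> Y \<longrightarrow> indep X) \<and>
     (\<forall>X Y. indep X \<and> indep Y \<and> card X < card Y \<longrightarrow>
        (\<exists>y\<in>Y - X. indep (insert y X)))"

definition mrank :: "('a set \<Rightarrow> bool) \<Rightarrow> 'a set \<Rightarrow> nat" where
  "mrank indep X = Max {card I | I. I \<subseteq> X \<and> indep I}"

definition circuit :: "'a set \<Rightarrow> ('a set \<Rightarrow> bool) \<Rightarrow> 'a set \<Rightarrow> bool" where
  "circuit E indep C \<longleftrightarrow> C \<subseteq> E \<and> \<not> indep C \<and> (\<forall>x\<in>C. indep (C - {x}))"

definition max_circuit_size :: "'a set \<Rightarrow> ('a set \<Rightarrow> bool) \<Rightarrow> nat" where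
  "max_circuit_size E indep = Max {card C | C. circuit E indep C}"

text \<open>A rooted tree given by a finite vertex set V, a root, and a parent map;
  every vertex reaches the root by iterating the parent map.  Its edges are
  the pairs {v, parent v} for v \<noteq> root.\<close>
definition rooted_tree :: "'v set \<Rightarrow> 'v \<Rightarrow> ('v \<Rightarrow> 'v) \<Rightarrow> bool" where
  "rooted_tree V root par \<longleftrightarrow>
     finite V \<and> root \<in> V \<and>
     (\<forall>v\<in>V. v \<noteq> root \<longrightarrow> par v \<in> V) \<and>
     (\<forall>v\<in>V. \<exists>n. (par ^^ n) v = root)"

definition tdist :: "'v \<Rightarrow> ('v \<Rightarrow> 'v) \<Rightarrow> 'v \<Rightarrow> nat" where
  "tdist root par v = (LEAST n. (par ^^ n) v = root)"

definition tedges :: "'v set \<Rightarrow> nat" where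
  "tedges V = card V - 1"

definition tdepth :: "'v set \<Rightarrow> 'v \<Rightarrow> ('v \<Rightarrow> 'v) \<Rightarrow> nat" where
  "tdepth V root par = Max (tdist root par ` V)"

definition root_path :: "'v \<Rightarrow> ('v \<Rightarrow> 'v) \<Rightarrow> 'v \<Rightarrow> 'v set" where
  "root_path root par v = {(par ^^ k) v | k. k \<le> tdist root par v}"

text \<open>Number of edges of T*(X), the union of the root paths to the vertices f(X)
  (a subtree containing the root when X is nonempty; empty when X is empty).\<close>
definition tstar_edges :: "'v \<Rightarrow> ('v \<Rightarrow> 'v) \<Rightarrow> ('a \<Rightarrow> 'v) \<Rightarrow> 'a set \<Rightarrow> nat" where
  "tstar_edges root par f X = card (\<Union>x\<in>X. root_path root par (f x)) - 1"

definition depth_decomposition ::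
  "'a set \<Rightarrow> ('a set \<Rightarrow> bool) \<Rightarrow> 'v set \<Rightarrow> 'v \<Rightarrow> ('v \<Rightarrow> 'v) \<Rightarrow> ('a \<Rightarrow> 'v) \<Rightarrow> bool" where
  "depth_decomposition E indep V root par f \<longleftrightarrow>
     rooted_tree V root par \<and>
     (\<forall>x\<in>E. f x \<in> V) \<and>
     mrank indep E = tedges V \<and>
     (\<forall>X. X \<subseteq> E \<longrightarrow> mrank indep X \<le> tstar_edges root par f X)"

text \<open>Branch-depth: minimum depth over all depth-decompositions.  Tree vertices
  are taken to be natural numbers (every finite tree has such a copy).\<close>
definition branch_depth :: "'a set \<Rightarrow> ('a set \<Rightarrow> bool) \<Rightarrow> nat" where
  "branch_depth E indep =
     Min {tdepth V root par | (V :: nat set) root par f.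
            depth_decomposition E indep V root par f}"

end

theory Submission
  imports Defs "HOL-Library.Countable" "HOL-Library.Sublist"
begin

text \<open>Induction on the size l of a largest circuit.  Decompositions of the two sides of a
  separation glue at their roots, so it suffices to treat connected matroids.  In a connected
  matroid M let C be a largest circuit.  If D is a circuit of M/C, then either D is strictly
  contained in a circuit of M, or D is a circuit of M skew to C; in the second case a circuit
  crossing C and D can be shrunk, by contracting its elements outside C \<union> D, until a
  single outside element p remains, and the elements essential for spanning p then give a
  circuit W with 2|W| \<ge> |C| + |D| + 2.  Either way |D| < l, so M/C has a decomposition of
  depth (l - 1)^2, and hanging it below a path of length r(C) = |C| - 1 \<le> l - 1 gives
  depth at most (l - 1)^2 + l - 1 \<le> l^2.\<close>

section \<open>Rank, span and circuits\<close>

locale finite_matroid =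
  fixes E :: "'a set" and indep :: "'a set \<Rightarrow> bool"
  assumes matroid: "matroid E indep"
begin

abbreviation rk :: "'a set \<Rightarrow> nat" where "rk \<equiv> mrank indep"

lemma finite_ground: "finite E"
  using matroid unfolding matroid_def by blast

lemma indep_empty: "indep {}"
  using matroid unfolding matroid_def by blast

lemma indep_subset_ground: "indep X \<Longrightarrow> X \<subseteq> E"
  using matroid unfolding matroid_def by blast

lemma indep_subset: "indep Y \<Longrightarrow> X \<subseteq> Y \<Longrightarrow> indep X"
  using matroid unfolding matroid_def by blast

lemma indep_augment: "indep X \<Longrightarrow> indep Y \<Longrightarrow> card X < card Y \<Longrightarrow> \<exists>y\<in>Y - X. indep (insert y X)"
  using matroid unfolding matroid_def by blast

lemma indep_finite: "indep X \<Longrightarrow> finite X"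
  using indep_subset_ground finite_ground finite_subset by blast

lemma finite_indep_cards: "X \<subseteq> E \<Longrightarrow> finite {card J |J. J \<subseteq> X \<and> indep J}"
proof -
  assume "X \<subseteq> E"
  have "{card J |J. J \<subseteq> X \<and> indep J} \<subseteq> card ` Pow X" by auto
  moreover have "finite X" using \<open>X \<subseteq> E\<close> finite_ground finite_subset by blast
  ultimately show ?thesis using finite_subset by blast
qed

lemma rank_witness: "X \<subseteq> E \<Longrightarrow> \<exists>J. J \<subseteq> X \<and> indep J \<and> card J = rk X"
proof -
  assume X: "X \<subseteq> E"
  have ne: "{card J |J. J \<subseteq> X \<and> indep J} \<noteq> {}" using indep_empty by blast
  have "rk X \<in> {card J |J. J \<subseteq> X \<and> indep J}"
    unfolding mrank_def using Max_in[OF finite_indep_cards[OF X] ne] .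
  thus ?thesis by auto
qed

lemma card_le_rank: "X \<subseteq> E \<Longrightarrow> J \<subseteq> X \<Longrightarrow> indep J \<Longrightarrow> card J \<le> rk X"
  unfolding mrank_def by (rule Max_ge[OF finite_indep_cards]) auto

lemma rank_le_card: "X \<subseteq> E \<Longrightarrow> rk X \<le> card X"
proof -
  assume X: "X \<subseteq> E"
  obtain J where "J \<subseteq> X" "indep J" "card J = rk X" using rank_witness[OF X] by blast
  moreover have "finite X" using X finite_ground finite_subset by blast
  ultimately show ?thesis using card_mono[of X J] by simp
qed

lemma rank_mono: "X \<subseteq> Y \<Longrightarrow> Y \<subseteq> E \<Longrightarrow> rk X \<le> rk Y"
proof -
  assume a: "X \<subseteq> Y" "Y \<subseteq> E"
  have XE: "X \<subseteq> E" using a by (rule subset_trans)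
  obtain J where J: "J \<subseteq> X" "indep J" "card J = rk X" using rank_witness[OF XE] by blast
  have "J \<subseteq> Y" using J a by blast
  from card_le_rank[OF a(2) this J(2)] J(3) show ?thesis by simp
qed

lemma rank_indep: "indep X \<Longrightarrow> rk X = card X"
proof -
  assume a: "indep X"
  have X: "X \<subseteq> E" using indep_subset_ground a by blast
  show ?thesis using card_le_rank[OF X _ a] rank_le_card[OF X] by simp
qed

lemma indep_if_rank_eq_card: "X \<subseteq> E \<Longrightarrow> rk X = card X \<Longrightarrow> indep X"
proof -
  assume X: "X \<subseteq> E" "rk X = card X"
  obtain J where J: "J \<subseteq> X" "indep J" "card J = rk X" using rank_witness X by blast
  have "finite X" using X finite_ground finite_subset by blast
  hence "J = X" using J X card_subset_eq[of X J] by simp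
  thus ?thesis using J by simp
qed

lemma rank_lt_card_if_dep: "X \<subseteq> E \<Longrightarrow> \<not> indep X \<Longrightarrow> rk X < card X"
proof -
  assume a: "X \<subseteq> E" "\<not> indep X"
  hence "rk X \<noteq> card X" using indep_if_rank_eq_card by blast
  thus ?thesis using rank_le_card[OF a(1)] by simp
qed

lemma indep_extend_to_rank: "indep J \<Longrightarrow> J \<subseteq> X \<Longrightarrow> X \<subseteq> E \<Longrightarrow> \<exists>K. J \<subseteq> K \<and> K \<subseteq> X \<and> indep K \<and> card K = rk X"
proof (induction "rk X - card J" arbitrary: J)
  case 0
  have "card J \<le> rk X" using card_le_rank[OF 0(4) 0(3) 0(2)] .
  hence "card J = rk X" using 0(1) by simp
  thus ?case using 0 by blast
next
  case (Suc n)
  obtain B where B: "B \<subseteq> X" "indep B" "card B = rk X" using rank_witness[OF Suc(5)] by blast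
  have lt: "card J < card B" using Suc(2) B(3) by linarith
  obtain y where y: "y \<in> B - J" "indep (insert y J)" using indep_augment[OF Suc(3) B(2) lt] by blast
  have fJ: "finite J" using indep_finite[OF Suc(3)] .
  have n: "n = rk X - card (insert y J)" using Suc(2) y(1) fJ by simp
  have sub: "insert y J \<subseteq> X" using y(1) B(1) Suc(4) by blast
  obtain K where K: "insert y J \<subseteq> K" "K \<subseteq> X" "indep K" "card K = rk X"
    using Suc(1)[OF n y(2) sub Suc(5)] by blast
  have "J \<subseteq> K" using K(1) by blast
  thus ?case using K by blast
qed

lemma rank_submodular: "X \<subseteq> E \<Longrightarrow> Y \<subseteq> E \<Longrightarrow> rk (X \<union> Y) + rk (X \<inter> Y) \<le> rk X + rk Y"
proof -
  assume X: "X \<subseteq> E" and Y: "Y \<subseteq> E"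
  have XY: "X \<inter> Y \<subseteq> E" "X \<union> Y \<subseteq> E" using X Y by auto
  obtain J where J: "J \<subseteq> X \<inter> Y" "indep J" "card J = rk (X \<inter> Y)" using rank_witness[OF XY(1)] by blast
  have JXY: "J \<subseteq> X \<union> Y" using J(1) by blast
  obtain K where K: "J \<subseteq> K" "K \<subseteq> X \<union> Y" "indep K" "card K = rk (X \<union> Y)"
    using indep_extend_to_rank[OF J(2) JXY XY(2)] by blast
  have fK: "finite K" using indep_finite[OF K(3)] .
  have i1: "indep (K \<inter> X)" using indep_subset[OF K(3)] by blast
  have i2: "indep (K \<inter> Y)" using indep_subset[OF K(3)] by blast
  have c1: "card (K \<inter> X) \<le> rk X" using card_le_rank[OF X _ i1] by blast
  have c2: "card (K \<inter> Y) \<le> rk Y" using card_le_rank[OF Y _ i2] by blast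
  have c3: "card (K \<inter> X) + card (K \<inter> Y) = card ((K \<inter> X) \<union> (K \<inter> Y)) + card ((K \<inter> X) \<inter> (K \<inter> Y))"
    using card_Un_Int[of "K \<inter> X" "K \<inter> Y"] fK by simp
  have e: "(K \<inter> X) \<union> (K \<inter> Y) = K" using K(2) by blast
  have JK: "J \<subseteq> (K \<inter> X) \<inter> (K \<inter> Y)" using J(1) K(1) by blast
  have c4: "card J \<le> card ((K \<inter> X) \<inter> (K \<inter> Y))"
    using card_mono[OF _ JK] fK by simp
  show ?thesis using c1 c2 c3 c4 e J(3) K(4) by simp
qed

lemma rank_union_le: "X \<subseteq> E \<Longrightarrow> Y \<subseteq> E \<Longrightarrow> rk (X \<union> Y) \<le> rk X + rk Y"
  using rank_submodular[of X Y] by linarith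

lemma rank_empty: "rk {} = 0"
  using rank_indep indep_empty by simp

lemma rank_insert_le: "X \<subseteq> E \<Longrightarrow> e \<in> E \<Longrightarrow> rk (insert e X) \<le> rk X + 1"
proof -
  assume "X \<subseteq> E" "e \<in> E"
  hence "rk ({e} \<union> X) \<le> rk {e} + rk X" using rank_union_le[of "{e}" X] by blast
  moreover have "rk {e} \<le> 1" using rank_le_card[of "{e}"] \<open>e \<in> E\<close> by simp
  ultimately show ?thesis by simp
qed

definition spans :: "'a set \<Rightarrow> 'a \<Rightarrow> bool" where
  "spans S p \<longleftrightarrow> rk (insert p S) = rk S"

lemma spans_mono: "spans A p \<Longrightarrow> A \<subseteq> S \<Longrightarrow> S \<subseteq> E \<Longrightarrow> p \<in> E \<Longrightarrow> spans S p"
proof -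
  assume a: "spans A p" "A \<subseteq> S" "S \<subseteq> E" "p \<in> E"
  have pA: "insert p A \<subseteq> E" using a by blast
  have submod: "rk (S \<union> insert p A) + rk (S \<inter> insert p A) \<le> rk S + rk (insert p A)"
    using rank_submodular[OF a(3) pA] .
  have union: "S \<union> insert p A = insert p S" using a by blast
  have mono_A: "rk A \<le> rk (S \<inter> insert p A)" using rank_mono[of A "S \<inter> insert p A"] a(2,3) by blast
  have mono_S: "rk S \<le> rk (insert p S)" using rank_mono[of S "insert p S"] a(3,4) by blast
  show ?thesis using submod[unfolded union] mono_A mono_S a(1) unfolding spans_def by linarith
qed

lemma spans_trans: "spans S p \<Longrightarrow> spans (insert p S) z \<Longrightarrow> S \<subseteq> E \<Longrightarrow> p \<in> E \<Longrightarrow> z \<in> E \<Longrightarrow> spans S z"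
proof -
  assume a: "spans S p" "spans (insert p S) z" "S \<subseteq> E" "p \<in> E" "z \<in> E"
  have "rk (insert z S) \<le> rk (insert z (insert p S))" using rank_mono[of "insert z S" "insert z (insert p S)"] a(3,4,5) by blast
  also have "\<dots> = rk S" using a(1,2) unfolding spans_def by simp
  moreover have "rk S \<le> rk (insert z S)" by (rule rank_mono) (use a in auto)
  ultimately show ?thesis unfolding spans_def by simp
qed

lemma indep_insert_if_not_spans: "indep S \<Longrightarrow> p \<in> E \<Longrightarrow> p \<notin> S \<Longrightarrow> \<not> spans S p \<Longrightarrow> indep (insert p S)"
proof -
  assume a: "indep S" "p \<in> E" "p \<notin> S" "\<not> spans S p"
  have S: "S \<subseteq> E" using a indep_subset_ground by blast
  have S': "insert p S \<subseteq> E" using S a(2) by blast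
  have "rk S \<le> rk (insert p S)" using rank_mono[OF _ S'] by blast
  hence rank_ins: "rk (insert p S) = rk S + 1" using rank_insert_le[OF S a(2)] a(4) unfolding spans_def by linarith
  have card_ins: "card (insert p S) = card S + 1" using a(3) indep_finite[OF a(1)] by simp
  show ?thesis using indep_if_rank_eq_card[OF S'] rank_ins card_ins rank_indep[OF a(1)] by simp
qed

abbreviation circ :: "'a set \<Rightarrow> bool" where "circ C \<equiv> circuit E indep C"

lemma circuit_subset_ground: "circ C \<Longrightarrow> C \<subseteq> E"
  unfolding circuit_def by blast

lemma circuit_dep: "circ C \<Longrightarrow> \<not> indep C"
  unfolding circuit_def by blast

lemma circuit_minus_indep: "circ C \<Longrightarrow> c \<in> C \<Longrightarrow> indep (C - {c})"
  unfolding circuit_def by blast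

lemma circuit_finite: "circ C \<Longrightarrow> finite C"
  using circuit_subset_ground finite_ground finite_subset by blast

lemma circuit_nonempty: "circ C \<Longrightarrow> C \<noteq> {}"
  using circuit_dep indep_empty by blast

lemma card_circuit_ge_1: "circ C \<Longrightarrow> card C \<ge> 1"
  using circuit_nonempty circuit_finite by (simp add: Suc_leI card_gt_0_iff)

lemma circuit_rank: "circ C \<Longrightarrow> rk C = card C - 1"
proof -
  assume c: "circ C"
  obtain x where x: "x \<in> C" using circuit_nonempty[OF c] by blast
  have "card (C - {x}) = card C - 1" using x circuit_finite[OF c] by simp
  moreover have "card (C - {x}) \<le> rk C" using card_le_rank[OF circuit_subset_ground[OF c] _ circuit_minus_indep[OF c x]] by blast
  moreover have "rk C < card C" using rank_lt_card_if_dep[OF circuit_subset_ground[OF c] circuit_dep[OF c]] .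
  ultimately show ?thesis by linarith
qed

lemma circuit_spans_member: "circ C \<Longrightarrow> c \<in> C \<Longrightarrow> spans (C - {c}) c"
proof -
  assume a: "circ C" "c \<in> C"
  have "insert c (C - {c}) = C" using a by blast
  moreover have "rk (C - {c}) = card C - 1"
    using rank_indep[OF circuit_minus_indep[OF a]] a circuit_finite[OF a(1)] by simp
  ultimately show ?thesis using circuit_rank[OF a(1)] unfolding spans_def by simp
qed

lemma spans_if_circuit_minus_subset: "circ W \<Longrightarrow> p \<in> W \<Longrightarrow> W - {p} \<subseteq> S \<Longrightarrow> S \<subseteq> E \<Longrightarrow> spans S p"
  using spans_mono[OF circuit_spans_member] circuit_subset_ground by blast

lemma circuit_subset_eq: "circ C1 \<Longrightarrow> circ C2 \<Longrightarrow> C1 \<subseteq> C2 \<Longrightarrow> C1 = C2"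
proof (rule ccontr)
  assume a: "circ C1" "circ C2" "C1 \<subseteq> C2" "C1 \<noteq> C2"
  then obtain c where c: "c \<in> C2" "c \<notin> C1" by blast
  have "C1 \<subseteq> C2 - {c}" using a c by blast
  hence "indep C1" using indep_subset[OF circuit_minus_indep[OF a(2) c(1)]] by blast
  thus False using circuit_dep[OF a(1)] by blast
qed

lemma dep_contains_circuit: "X \<subseteq> E \<Longrightarrow> \<not> indep X \<Longrightarrow> \<exists>C. C \<subseteq> X \<and> circ C"
proof (induction "card X" arbitrary: X rule: less_induct)
  case less
  show ?case
  proof (cases "\<forall>x\<in>X. indep (X - {x})")
    case True
    hence "circ X" unfolding circuit_def using less by blast
    thus ?thesis by blast
  next
    case False
    then obtain x where x: "x \<in> X" "\<not> indep (X - {x})" by blast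
    have fX: "finite X" using less(2) finite_ground finite_subset by blast
    have lt: "card (X - {x}) < card X" using card_Diff1_less[OF fX x(1)] .
    have sub: "X - {x} \<subseteq> E" using less(2) by blast
    obtain C where "C \<subseteq> X - {x}" "circ C" using less(1)[OF lt sub x(2)] by blast
    thus ?thesis by blast
  qed
qed

lemma circuit_in_insert: "indep S \<Longrightarrow> p \<in> E \<Longrightarrow> p \<notin> S \<Longrightarrow> \<not> indep (insert p S) \<Longrightarrow> \<exists>W. circ W \<and> p \<in> W \<and> W \<subseteq> insert p S"
proof -
  assume a: "indep S" "p \<in> E" "p \<notin> S" "\<not> indep (insert p S)"
  have sub: "insert p S \<subseteq> E" using indep_subset_ground[OF a(1)] a(2) by blast
  obtain W where W: "W \<subseteq> insert p S" "circ W" using dep_contains_circuit[OF sub a(4)] by blast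
  have "p \<in> W"
  proof (rule ccontr)
    assume "p \<notin> W"
    hence "W \<subseteq> S" using W by blast
    thus False using indep_subset[OF a(1)] circuit_dep[OF W(2)] by blast
  qed
  thus ?thesis using W by blast
qed

lemma circuit_if_spans: "S \<subseteq> E \<Longrightarrow> p \<in> E \<Longrightarrow> p \<notin> S \<Longrightarrow> spans S p \<Longrightarrow> \<exists>W. circ W \<and> p \<in> W \<and> W \<subseteq> insert p S"
proof -
  assume a: "S \<subseteq> E" "p \<in> E" "p \<notin> S" "spans S p"
  obtain B where B: "B \<subseteq> S" "indep B" "card B = rk S" using rank_witness[OF a(1)] by blast
  have pB: "p \<notin> B" using B a by blast
  have sub: "insert p B \<subseteq> insert p S" using B by blast
  have sub2: "insert p S \<subseteq> E" using a by blast
  have "rk (insert p B) \<le> rk (insert p S)" using rank_mono[OF sub sub2] .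
  hence "rk (insert p B) \<le> card B" using a(4) B unfolding spans_def by simp
  moreover have "card (insert p B) = card B + 1" using pB indep_finite[OF B(2)] by simp
  ultimately have "\<not> indep (insert p B)" using rank_indep by fastforce
  then obtain W where "circ W" "p \<in> W" "W \<subseteq> insert p B" using circuit_in_insert[OF B(2) a(2) pB] by blast
  thus ?thesis using sub by blast
qed

lemma strong_circuit_elim:
  assumes Z: "circ Z" and Y: "circ Y" and p: "p \<in> Z" "p \<in> Y" and z: "z \<in> Z" "z \<notin> Y"
  shows "\<exists>W. circ W \<and> z \<in> W \<and> W \<subseteq> (Z \<union> Y) - {p}"
proof -
  define S where "S = (Z \<union> Y) - {p, z}"
  have SE: "S \<subseteq> E" unfolding S_def using circuit_subset_ground[OF Z] circuit_subset_ground[OF Y] by blast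
  have pE: "p \<in> E" using p circuit_subset_ground[OF Y] by blast
  have zE: "z \<in> E" using z circuit_subset_ground[OF Z] by blast
  have zp: "z \<noteq> p" using z p by blast
  have sp_p: "spans S p" using spans_if_circuit_minus_subset[OF Y p(2) _ SE] z(2) unfolding S_def by blast
  have pSE: "insert p S \<subseteq> E" using SE pE by blast
  have sp_z: "spans (insert p S) z" using spans_if_circuit_minus_subset[OF Z z(1) _ pSE] unfolding S_def by blast
  have sp: "spans S z" using spans_trans[OF sp_p sp_z SE pE zE] .
  have zS: "z \<notin> S" unfolding S_def by blast
  obtain W where "circ W" "z \<in> W" "W \<subseteq> insert z S" using circuit_if_spans[OF SE zE zS sp] by blast
  moreover have "insert z S \<subseteq> (Z \<union> Y) - {p}" unfolding S_def using z zp by blast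
  ultimately show ?thesis by blast
qed

lemma circuit_through_both:
  "circ C1 \<Longrightarrow> circ C2 \<Longrightarrow> y \<in> C1 \<Longrightarrow> y \<in> C2 \<Longrightarrow> x \<in> C1 \<Longrightarrow> z \<in> C2 \<Longrightarrow> \<exists>W. circ W \<and> x \<in> W \<and> z \<in> W"
proof (induction "card (C1 \<union> C2)" arbitrary: C1 C2 y x z rule: less_induct)
  case less
  show ?case
  proof (cases "x \<in> C2 \<or> z \<in> C1")
    case True
    thus ?thesis using less by blast
  next
    case False
    obtain C3 where C3: "circ C3" "x \<in> C3" "C3 \<subseteq> (C1 \<union> C2) - {y}"
      using strong_circuit_elim[OF less(2) less(3) less(4) less(5) less(6)] False by blast
    show ?thesis
    proof (cases "z \<in> C3")
      case True thus ?thesis using C3 by blast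
    next
      case zC3: False
      have "\<not> C3 \<subseteq> C1"
      proof
        assume "C3 \<subseteq> C1"
        hence "C3 = C1" using circuit_subset_eq[OF C3(1) less(2)] by blast
        thus False using C3(3) less(4) by blast
      qed
      then obtain w where w: "w \<in> C3" "w \<notin> C1" by blast
      have wC2: "w \<in> C2" using w C3(3) by blast
      obtain C4 where C4: "circ C4" "z \<in> C4" "C4 \<subseteq> (C2 \<union> C3) - {w}"
        using strong_circuit_elim[OF less(3) C3(1) wC2 w(1) less(7) zC3] by blast
      have "\<not> C4 \<subseteq> C2"
      proof
        assume "C4 \<subseteq> C2"
        hence "C4 = C2" using circuit_subset_eq[OF C4(1) less(3)] by blast
        thus False using C4(3) wC2 by blast
      qed
      then obtain v where v: "v \<in> C4" "v \<notin> C2" by blast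
      have vC1: "v \<in> C1" using v C4(3) C3(3) by blast
      have sub: "C1 \<union> C4 \<subseteq> (C1 \<union> C2) - {w}" using C4(3) C3(3) w by blast
      have fin: "finite (C1 \<union> C2)" using circuit_finite[OF less(2)] circuit_finite[OF less(3)] by blast
      have "card (C1 \<union> C4) \<le> card ((C1 \<union> C2) - {w})" using card_mono[OF _ sub] fin by blast
      also have "\<dots> < card (C1 \<union> C2)" using card_Diff1_less[OF fin] wC2 by blast
      finally have lt: "card (C1 \<union> C4) < card (C1 \<union> C2)" .
      show ?thesis using less(1)[OF lt less(2) C4(1) vC1 v(1) less(6) C4(2)] .
    qed
  qed
qed

definition separator :: "'a set \<Rightarrow> bool" where
  "separator A \<longleftrightarrow> (\<forall>Y. circ Y \<longrightarrow> Y \<subseteq> A \<or> Y \<subseteq> E - A)"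

lemma rank_separator: "A \<subseteq> E \<Longrightarrow> separator A \<Longrightarrow> rk E = rk A + rk (E - A)"
proof -
  assume A: "A \<subseteq> E" "separator A"
  have B: "E - A \<subseteq> E" by blast
  obtain JA where JA: "JA \<subseteq> A" "indep JA" "card JA = rk A" using rank_witness[OF A(1)] by blast
  obtain JB where JB: "JB \<subseteq> E - A" "indep JB" "card JB = rk (E - A)" using rank_witness[OF B] by blast
  have sub: "JA \<union> JB \<subseteq> E" using JA JB A by blast
  have "indep (JA \<union> JB)"
  proof (rule ccontr)
    assume "\<not> indep (JA \<union> JB)"
    then obtain Y where Y: "Y \<subseteq> JA \<union> JB" "circ Y" using dep_contains_circuit[OF sub] by blast
    hence "Y \<subseteq> A \<or> Y \<subseteq> E - A" using A(2) unfolding separator_def by blast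
    hence "Y \<subseteq> JA \<or> Y \<subseteq> JB" using Y(1) JA(1) JB(1) by blast
    thus False using indep_subset[OF JA(2)] indep_subset[OF JB(2)] circuit_dep[OF Y(2)] by blast
  qed
  hence "card (JA \<union> JB) \<le> rk E" using card_le_rank[OF _ sub] by blast
  moreover have "card (JA \<union> JB) = card JA + card JB"
    using card_Un_disjoint[OF indep_finite[OF JA(2)] indep_finite[OF JB(2)]] JA JB by blast
  moreover have "rk E \<le> rk A + rk (E - A)" using rank_union_le[OF A(1) B] A(1) by (simp add: Un_absorb1)
  ultimately show ?thesis using JA JB by linarith
qed

definition connected :: bool where
  "connected \<longleftrightarrow> (\<forall>A. A \<subseteq> E \<and> A \<noteq> {} \<and> A \<noteq> E \<longrightarrow> \<not> separator A)"

lemma connected_circuit_through: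
  assumes C: "circ C" and conn: "connected" and d: "d \<in> E"
  shows "\<exists>W. circ W \<and> d \<in> W \<and> W \<inter> C \<noteq> {}"
proof -
  define A where "A = {e. \<exists>W. circ W \<and> e \<in> W \<and> W \<inter> C \<noteq> {}}"
  have AE: "A \<subseteq> E" unfolding A_def using circuit_subset_ground by blast
  have CA: "C \<subseteq> A" unfolding A_def using C circuit_nonempty[OF C] by blast
  have sA: "separator A" unfolding separator_def
  proof (intro allI impI)
    fix Y assume Y: "circ Y"
    show "Y \<subseteq> A \<or> Y \<subseteq> E - A"
    proof (cases "Y \<inter> A = {}")
      case True thus ?thesis using circuit_subset_ground[OF Y] by blast
    next
      case False
      then obtain a where a: "a \<in> Y" "a \<in> A" by blast
      then obtain W0 where W0: "circ W0" "a \<in> W0" "W0 \<inter> C \<noteq> {}" unfolding A_def by blast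
      then obtain c where c: "c \<in> W0" "c \<in> C" by blast
      have "Y \<subseteq> A"
      proof
        fix y assume y: "y \<in> Y"
        obtain W where "circ W" "c \<in> W" "y \<in> W" using circuit_through_both[OF W0(1) Y W0(2) a(1) c(1) y] by blast
        thus "y \<in> A" unfolding A_def using c(2) by blast
      qed
      thus ?thesis by blast
    qed
  qed
  have "A = E" using conn AE CA circuit_nonempty[OF C] sA unfolding connected_def by blast
  thus ?thesis using d unfolding A_def by blast
qed

end

section \<open>Minors and skew sets\<close>

text \<open>The contraction M/X is encoded through a basis J of X: Y is independent in M/X iff
  Y \<union> J is independent in M.\<close>
definition contract_indep :: "'a set \<Rightarrow> ('a set \<Rightarrow> bool) \<Rightarrow> 'a set \<Rightarrow> 'a set \<Rightarrow> 'a set \<Rightarrow> bool" where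
  "contract_indep E indep X J Y \<longleftrightarrow> Y \<subseteq> E - X \<and> indep (Y \<union> J)"

definition restrict_indep :: "('a set \<Rightarrow> bool) \<Rightarrow> 'a set \<Rightarrow> 'a set \<Rightarrow> bool" where
  "restrict_indep indep A Y \<longleftrightarrow> indep Y \<and> Y \<subseteq> A"

context finite_matroid begin

lemma matroid_restrict: "A \<subseteq> E \<Longrightarrow> matroid A (restrict_indep indep A)"
proof -
  assume A: "A \<subseteq> E"
  have fin: "finite A" using A finite_ground finite_subset by blast
  have empty: "restrict_indep indep A {}" unfolding restrict_indep_def using indep_empty by blast
  have ground: "\<forall>X. restrict_indep indep A X \<longrightarrow> X \<subseteq> A" unfolding restrict_indep_def by blast
  have down: "\<forall>X Y. restrict_indep indep A Y \<and> X \<subseteq> Y \<longrightarrow> restrict_indep indep A X" unfolding restrict_indep_def using indep_subset by blast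
  have augment: "\<forall>X Y. restrict_indep indep A X \<and> restrict_indep indep A Y \<and> card X < card Y \<longrightarrow> (\<exists>y\<in>Y - X. restrict_indep indep A (insert y X))"
  proof (intro allI impI)
    fix X Y assume a: "restrict_indep indep A X \<and> restrict_indep indep A Y \<and> card X < card Y"
    have "indep X" "indep Y" "card X < card Y" using a unfolding restrict_indep_def by auto
    then obtain y where "y \<in> Y - X" "indep (insert y X)" using indep_augment by blast
    thus "\<exists>y\<in>Y - X. restrict_indep indep A (insert y X)" using a unfolding restrict_indep_def by blast
  qed
  show ?thesis unfolding matroid_def using fin empty ground down augment by blast
qed

lemma rank_restrict: "X \<subseteq> A \<Longrightarrow> mrank (restrict_indep indep A) X = rk X"
proof -
  assume "X \<subseteq> A"
  hence "{card J |J. J \<subseteq> X \<and> restrict_indep indep A J} = {card J |J. J \<subseteq> X \<and> indep J}"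
    unfolding restrict_indep_def by blast
  thus ?thesis unfolding mrank_def by simp
qed

lemma circuit_restrict: "A \<subseteq> E \<Longrightarrow> circuit A (restrict_indep indep A) Y \<Longrightarrow> circ Y"
proof -
  assume A: "A \<subseteq> E" and a: "circuit A (restrict_indep indep A) Y"
  have "Y \<subseteq> A" using a unfolding circuit_def by blast
  hence "\<not> indep Y" using a unfolding circuit_def restrict_indep_def by blast
  moreover have "\<forall>x\<in>Y. indep (Y - {x})" using a unfolding circuit_def restrict_indep_def by blast
  moreover have "Y \<subseteq> E" using a A unfolding circuit_def by blast
  ultimately show ?thesis unfolding circuit_def by blast
qed

lemma matroid_contract: "X \<subseteq> E \<Longrightarrow> J \<subseteq> X \<Longrightarrow> indep J \<Longrightarrow> matroid (E - X) (contract_indep E indep X J)"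
proof -
  assume a: "X \<subseteq> E" "J \<subseteq> X" "indep J"
  have fin: "finite (E - X)" using finite_ground by blast
  have empty: "contract_indep E indep X J {}" unfolding contract_indep_def using a by simp
  have ground: "\<forall>Y. contract_indep E indep X J Y \<longrightarrow> Y \<subseteq> E - X" unfolding contract_indep_def by blast
  have down: "\<forall>Y Z. contract_indep E indep X J Z \<and> Y \<subseteq> Z \<longrightarrow> contract_indep E indep X J Y"
  proof (intro allI impI)
    fix Y Z assume b: "contract_indep E indep X J Z \<and> Y \<subseteq> Z"
    have "Y \<union> J \<subseteq> Z \<union> J" using b by blast
    thus "contract_indep E indep X J Y" using b indep_subset unfolding contract_indep_def by blast
  qed
  have augment: "\<forall>Y Z. contract_indep E indep X J Y \<and> contract_indep E indep X J Z \<and> card Y < card Z \<longrightarrow> (\<exists>y\<in>Z - Y. contract_indep E indep X J (insert y Y))"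
  proof (intro allI impI)
    fix Y Z assume b0: "contract_indep E indep X J Y \<and> contract_indep E indep X J Z \<and> card Y < card Z"
    have b: "Y \<subseteq> E - X" "indep (Y \<union> J)" "Z \<subseteq> E - X" "indep (Z \<union> J)" "card Y < card Z"
      using b0 unfolding contract_indep_def by auto
    have fJ: "finite J" using indep_finite a by blast
    have fY: "finite Y" using indep_finite[OF b(2)] by simp
    have fZ: "finite Z" using indep_finite[OF b(4)] by simp
    have dY: "Y \<inter> J = {}" using b a by blast
    have dZ: "Z \<inter> J = {}" using b a by blast
    have "card (Y \<union> J) = card Y + card J" using card_Un_disjoint[OF fY fJ dY] .
    moreover have "card (Z \<union> J) = card Z + card J" using card_Un_disjoint[OF fZ fJ dZ] .
    ultimately have "card (Y \<union> J) < card (Z \<union> J)" using b by simp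
    then obtain y where y: "y \<in> (Z \<union> J) - (Y \<union> J)" "indep (insert y (Y \<union> J))"
      using indep_augment[OF b(2) b(4)] by blast
    have "insert y (Y \<union> J) = insert y Y \<union> J" by blast
    thus "\<exists>y\<in>Z - Y. contract_indep E indep X J (insert y Y)" using y b unfolding contract_indep_def by auto
  qed
  show ?thesis unfolding matroid_def using fin empty ground down augment by blast
qed

lemma rank_contract:
  assumes X: "X \<subseteq> E" and J: "J \<subseteq> X" "indep J" "card J = rk X" and Z: "Z \<subseteq> E - X"
  shows "mrank (contract_indep E indep X J) Z = rk (Z \<union> X) - rk X"
proof -
  interpret c: finite_matroid "E - X" "contract_indep E indep X J" using matroid_contract[OF X J(1,2)] by unfold_locales
  have ZX: "Z \<union> X \<subseteq> E" using X Z by blast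
  have fJ: "finite J" using indep_finite J by blast
  obtain Y where Y: "Y \<subseteq> Z" "contract_indep E indep X J Y" "card Y = mrank (contract_indep E indep X J) Z"
    using c.rank_witness[OF Z] by blast
  have YJ: "indep (Y \<union> J)" "Y \<inter> J = {}" using Y(2) J unfolding contract_indep_def by blast+
  have fY: "finite Y" using indep_finite[OF YJ(1)] by simp
  have "card (Y \<union> J) \<le> rk (Z \<union> X)" using card_le_rank[OF ZX _ YJ(1)] Y(1) J(1) by blast
  hence le1: "mrank (contract_indep E indep X J) Z \<le> rk (Z \<union> X) - rk X"
    using card_Un_disjoint[OF fY fJ YJ(2)] Y(3) J(3) by simp
  have JZX: "J \<subseteq> Z \<union> X" using J by blast
  obtain K where K: "J \<subseteq> K" "K \<subseteq> Z \<union> X" "indep K" "card K = rk (Z \<union> X)"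
    using indep_extend_to_rank[OF J(2) JZX ZX] by blast
  have KZ: "K - J \<subseteq> Z"
  proof
    fix x assume x: "x \<in> K - J"
    show "x \<in> Z"
    proof (rule ccontr)
      assume "x \<notin> Z"
      hence xX: "x \<in> X" using x K(2) by blast
      have "indep (insert x J)" using indep_subset[OF K(3)] x K(1) by blast
      hence "card (insert x J) \<le> rk X" using card_le_rank[OF X] xX J(1) by blast
      thus False using x fJ J(3) by simp
    qed
  qed
  have KJ: "(K - J) \<union> J = K" using K(1) by blast
  have "contract_indep E indep X J (K - J)" unfolding contract_indep_def using KZ Z K(3) KJ by auto
  hence "card (K - J) \<le> mrank (contract_indep E indep X J) Z" using c.card_le_rank[OF Z KZ] by blast
  moreover have "card (K - J) = card K - card J" using card_Diff_subset[OF fJ K(1)] .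
  ultimately show ?thesis using le1 K(4) J(3) by linarith
qed

definition skew :: "'a set \<Rightarrow> 'a set \<Rightarrow> bool" where
  "skew A B \<longleftrightarrow> rk (A \<union> B) = rk A + rk B"

lemma skew_commute: "skew A B \<Longrightarrow> skew B A"
  unfolding skew_def by (simp add: Un_commute add.commute)

lemma skew_subset_right:
  assumes AB: "A \<subseteq> E" "B \<subseteq> E" and sk: "skew A B" and B': "B' \<subseteq> B"
  shows "skew A B'"
proof -
  have AB'E: "A \<union> B' \<subseteq> E" and B'E: "B' \<subseteq> E" using AB B' by blast+
  have "rk ((A \<union> B') \<union> B) + rk ((A \<union> B') \<inter> B) \<le> rk (A \<union> B') + rk B"
    using rank_submodular[OF AB'E AB(2)] .
  moreover have "(A \<union> B') \<union> B = A \<union> B" using B' by blast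
  moreover have "rk B' \<le> rk ((A \<union> B') \<inter> B)" using rank_mono[of B' "(A \<union> B') \<inter> B"] B' AB by blast
  moreover have "rk (A \<union> B') \<le> rk A + rk B'" using rank_union_le[OF AB(1) B'E] .
  ultimately show ?thesis using sk unfolding skew_def by simp
qed

lemma skew_subset:
  assumes AB: "A \<subseteq> E" "B \<subseteq> E" and sk: "skew A B" and A': "A' \<subseteq> A" and B': "B' \<subseteq> B"
  shows "skew A' B'"
proof -
  have "skew B' A" using skew_commute[OF skew_subset_right[OF AB sk B']] .
  moreover have "B' \<subseteq> E" using B' AB by blast
  ultimately show ?thesis using skew_commute[OF skew_subset_right[OF _ AB(1) _ A']] by simp
qed

lemma circuit_in_skew_union:
  assumes AB: "A \<subseteq> E" "B \<subseteq> E" "A \<inter> B = {}" and sk: "skew A B"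
    and Z: "circ Z" "Z \<subseteq> A \<union> B"
  shows "Z \<subseteq> A \<or> Z \<subseteq> B"
proof (rule ccontr)
  assume "\<not> (Z \<subseteq> A \<or> Z \<subseteq> B)"
  then obtain a d where ad: "a \<in> Z" "a \<notin> B" "d \<in> Z" "d \<notin> A" by blast
  define Zd where "Zd = Z \<inter> B"
  have dZd: "d \<in> Zd" using ad Z unfolding Zd_def by blast
  have iZd: "indep Zd" using indep_subset[OF circuit_minus_indep[OF Z(1) ad(1)]] ad unfolding Zd_def by blast
  have fZd: "finite Zd" using indep_finite[OF iZd] .
  have ZdB: "Zd \<subseteq> B" unfolding Zd_def by blast
  \<comment> \<open>d is spanned by A and the rest of Zd, so Zd adds less than rk Zd to the rank of A\<close>
  have S: "A \<union> (Zd - {d}) \<subseteq> E" using AB ZdB by blast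
  have "spans (A \<union> (Zd - {d})) d"
    using spans_if_circuit_minus_subset[OF Z(1) ad(3) _ S] Z(2) unfolding Zd_def by blast
  moreover have "insert d (A \<union> (Zd - {d})) = A \<union> Zd" using dZd by blast
  ultimately have "rk (A \<union> Zd) = rk (A \<union> (Zd - {d}))" unfolding spans_def by simp
  also have "\<dots> \<le> rk A + rk (Zd - {d})" using rank_union_le[OF AB(1), of "Zd - {d}"] AB ZdB by blast
  also have "rk (Zd - {d}) = card Zd - 1" using rank_indep[OF indep_subset[OF iZd]] fZd dZd by simp
  finally have le: "rk (A \<union> Zd) \<le> rk A + (card Zd - 1)" .
  have "0 < card Zd" using fZd dZd by (auto simp: card_gt_0_iff)
  moreover have "skew A Zd" using skew_subset[OF AB(1,2) sk order_refl ZdB] .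
  ultimately show False using le rank_indep[OF iZd] unfolding skew_def by simp
qed

section \<open>Large circuits\<close>

lemma spans_union_circuit_minus:
  assumes C: "circ C" and c: "c \<in> C" and D: "D \<subseteq> E" and p: "p \<in> E" and sp: "spans (C \<union> D) p"
  shows "spans ((C - {c}) \<union> D) p"
proof -
  have CE: "C \<subseteq> E" using circuit_subset_ground[OF C] .
  have "spans ((C - {c}) \<union> D) c" using spans_if_circuit_minus_subset[OF C c] CE D by blast
  moreover have "insert c ((C - {c}) \<union> D) = C \<union> D" using c by blast
  ultimately have "rk (C \<union> D) = rk ((C - {c}) \<union> D)" unfolding spans_def by simp
  moreover have "rk (insert p ((C - {c}) \<union> D)) \<le> rk (insert p (C \<union> D))"
    by (rule rank_mono) (use CE D p in auto)
  moreover have "rk ((C - {c}) \<union> D) \<le> rk (insert p ((C - {c}) \<union> D))"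
    by (rule rank_mono) (use CE D p in auto)
  ultimately show ?thesis using sp unfolding spans_def by simp
qed

definition essential :: "'a set \<Rightarrow> 'a set \<Rightarrow> 'a \<Rightarrow> 'a \<Rightarrow> 'a set" where
  "essential C D p u = {x \<in> C - {u}. \<not> spans ((C - {u, x}) \<union> D) p}"

text \<open>For a smallest A1 \<subseteq> C with A1 \<union> D spanning p, every pair a \<notin> A1, b \<in> A1 is
  essential; otherwise submodularity of the rank, applied to A1 \<union> D and (C - {a, b}) \<union> D
  together with p, would let the smaller set (A1 - {b}) \<union> D span p.\<close>
lemma not_spans_minus_pair:
  assumes C: "circ C" and DE: "D \<subseteq> E" and sk: "skew C D" and pE: "p \<in> E"
    and A1C: "A1 \<subseteq> C" and A1: "spans (A1 \<union> D) p"
    and A1min: "\<forall>A. A \<subseteq> C \<and> spans (A \<union> D) p \<longrightarrow> card A1 \<le> card A"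
    and a: "a \<in> C - A1" and b: "b \<in> A1"
  shows "\<not> spans ((C - {a, b}) \<union> D) p"
proof
  assume s3: "spans ((C - {a, b}) \<union> D) p"
  have CE: "C \<subseteq> E" using circuit_subset_ground[OF C] .
  have fC: "finite C" using circuit_finite[OF C] .
  define A3 where "A3 = C - {a, b}"
  define U where "U = C - {a}"
  define N where "N = A1 \<inter> A3"
  have A3C: "A3 \<subseteq> C" and UC: "U \<subseteq> C" and NC: "N \<subseteq> C" unfolding A3_def U_def N_def using A1C by blast+
  have U: "A1 \<union> A3 = U" unfolding U_def A3_def using A1C a b by blast
  have iU: "indep U" using circuit_minus_indep[OF C, of a] a unfolding U_def by blast
  have NU: "N \<subseteq> U" "A1 \<subseteq> U" "A3 \<subseteq> U" using U unfolding N_def by blast+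
  \<comment> \<open>subsets of U are independent and skew to D, so their rank together with D is additive\<close>
  have rank_with_D: "rk (S \<union> D) = card S + rk D" if S: "S \<subseteq> U" for S
  proof -
    have "skew S D" using skew_subset[OF CE DE sk order_trans[OF S UC] order_refl] .
    then show ?thesis using rank_indep[OF indep_subset[OF iU S]] unfolding skew_def by simp
  qed
  have fA1: "finite A1" and fA3: "finite A3" using A1C A3C fC finite_subset by blast+
  have "card N \<le> card (A1 - {b})" by (rule card_mono) (use fA1 in \<open>auto simp: N_def A3_def\<close>)
  then have "card N < card A1" using card_Diff1_less[OF fA1 b] by simp
  have nsN: "\<not> spans (N \<union> D) p"
  proof
    assume "spans (N \<union> D) p"
    then have "card A1 \<le> card N" using A1min NC by blast
    then show False using \<open>card N < card A1\<close> by simp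
  qed
  have NDE: "N \<union> D \<subseteq> E" using NC CE DE by blast
  have "rk (N \<union> D) \<le> rk (insert p (N \<union> D))" by (rule rank_mono) (use NDE pE in auto)
  then have rNp: "rk (insert p (N \<union> D)) = card N + rk D + 1"
    using rank_insert_le[OF NDE pE] nsN rank_with_D[OF NU(1)] unfolding spans_def by linarith
  have r1p: "rk (insert p (A1 \<union> D)) = card A1 + rk D"
    using A1 rank_with_D[OF NU(2)] unfolding spans_def by simp
  have r3p: "rk (insert p (A3 \<union> D)) = card A3 + rk D"
    using s3 rank_with_D[OF NU(3)] unfolding A3_def spans_def by simp
  have UDE: "U \<union> D \<subseteq> E" using UC CE DE by blast
  have rUp: "card U + rk D \<le> rk (insert p (U \<union> D))"
    using rank_mono[of "U \<union> D" "insert p (U \<union> D)"] UDE pE rank_with_D[OF order_refl] by auto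
  have S1: "insert p (A1 \<union> D) \<subseteq> E" and S3: "insert p (A3 \<union> D) \<subseteq> E" using A1C A3C CE DE pE by blast+
  have sm: "rk (insert p (A1 \<union> D) \<union> insert p (A3 \<union> D)) + rk (insert p (A1 \<union> D) \<inter> insert p (A3 \<union> D))
      \<le> rk (insert p (A1 \<union> D)) + rk (insert p (A3 \<union> D))" using rank_submodular[OF S1 S3] .
  have eu: "insert p (A1 \<union> D) \<union> insert p (A3 \<union> D) = insert p (U \<union> D)" using U by blast
  have ei: "insert p (A1 \<union> D) \<inter> insert p (A3 \<union> D) = insert p (N \<union> D)" unfolding N_def by blast
  have cc: "card A1 + card A3 = card U + card N"
    using card_Un_Int[OF fA1 fA3] U unfolding N_def by simp
  show False using sm eu ei cc rNp r1p r3p rUp by simp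
qed

lemma many_essential_elements:
  assumes C: "circ C" and D: "circ D" and sk: "skew C D"
    and pE: "p \<in> E" and nD: "\<not> spans D p" and sp: "spans (C \<union> D) p"
  shows "\<exists>u\<in>C. card C \<le> 2 * card (essential C D p u)"
proof -
  have DE: "D \<subseteq> E" using circuit_subset_ground D by auto
  have fC: "finite C" using circuit_finite[OF C] .
  define F where "F = (\<lambda>A. A \<subseteq> C \<and> spans (A \<union> D) p)"
  obtain A1 where A1: "F A1" and A1min: "\<forall>A. F A \<longrightarrow> card A1 \<le> card A"
    using ex_has_least_nat[of F C card] sp unfolding F_def by blast
  have A1C: "A1 \<subseteq> C" using A1 unfolding F_def by blast
  have fA1: "finite A1" using A1C fC finite_subset by blast
  have A1ne: "A1 \<noteq> {}" using A1 nD unfolding F_def by auto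
  obtain c0 where c0: "c0 \<in> C" using circuit_nonempty[OF C] by blast
  have "F (C - {c0})" using spans_union_circuit_minus[OF C c0 DE pE sp] unfolding F_def by blast
  then have "card A1 < card C" using A1min card_Diff1_less[OF fC c0] by fastforce
  have claim: "x \<in> essential C D p u" if "u \<in> C - A1" "x \<in> A1" for u x
    using not_spans_minus_pair[OF C DE sk pE A1C _ _ that] A1 A1min A1C that
    unfolding essential_def F_def by blast
  have claim': "x \<in> essential C D p u" if "u \<in> A1" "x \<in> C - A1" for u x
    using not_spans_minus_pair[OF C DE sk pE A1C _ _ that(2) that(1)] A1 A1min A1C that
    unfolding essential_def F_def by (auto simp: insert_commute)
  have fin: "finite (essential C D p u)" for u unfolding essential_def using fC by simp
  show ?thesis
  proof (cases "card C \<le> 2 * card A1")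
    case True
    have "C - A1 \<noteq> {}" using \<open>card A1 < card C\<close> A1C by (metis Diff_eq_empty_iff less_irrefl subset_antisym)
    then obtain u where u: "u \<in> C - A1" by blast
    then have "A1 \<subseteq> essential C D p u" using claim by blast
    then have "card A1 \<le> card (essential C D p u)" using card_mono[OF fin] by blast
    then show ?thesis using True u by (intro bexI[of _ u]) auto
  next
    case False
    obtain u where u: "u \<in> A1" using A1ne by blast
    then have "C - A1 \<subseteq> essential C D p u" using claim' by blast
    then have "card (C - A1) \<le> card (essential C D p u)" using card_mono[OF fin] by blast
    moreover have "card (C - A1) = card C - card A1" using card_Diff_subset[OF fA1 A1C] .
    ultimately show ?thesis using False u A1C by (intro bexI[of _ u]) auto
  qed
qed

lemma essential_subset_circuit:
  assumes W: "circ W" "p \<in> W" "W \<subseteq> insert p ((C - {u}) \<union> D)" and CD: "C \<union> D \<subseteq> E"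
  shows "essential C D p u \<subseteq> W"
proof
  fix x assume x: "x \<in> essential C D p u"
  show "x \<in> W"
  proof (rule ccontr)
    assume "x \<notin> W"
    then have "W - {p} \<subseteq> (C - {u, x}) \<union> D" using W(3) by blast
    then have "spans ((C - {u, x}) \<union> D) p" using spans_if_circuit_minus_subset[OF W(1,2)] CD by blast
    then show False using x unfolding essential_def by blast
  qed
qed

lemma large_circuit_if_spanned:
  assumes C: "circ C" and D: "circ D" and disj: "C \<inter> D = {}" and sk: "skew C D"
    and pE: "p \<in> E" and pCD: "p \<notin> C \<union> D" and nC: "\<not> spans C p" and nD: "\<not> spans D p"
    and sp: "spans (C \<union> D) p"
  shows "\<exists>W. circ W \<and> card C + card D + 2 \<le> 2 * card W"
proof -
  have CE: "C \<subseteq> E" and DE: "D \<subseteq> E" using circuit_subset_ground C D by auto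
  have fC: "finite C" and fD: "finite D" using circuit_finite C D by auto
  obtain u where u: "u \<in> C" and gu: "card C \<le> 2 * card (essential C D p u)"
    using many_essential_elements[OF C D sk pE nD sp] by blast
  obtain v where v: "v \<in> D" and gv: "card D \<le> 2 * card (essential D C p v)"
    using many_essential_elements[OF D C skew_commute[OF sk] pE nC] sp by (auto simp: Un_commute)
  define S where "S = (C - {u}) \<union> (D - {v})"
  have SE: "S \<subseteq> E" unfolding S_def using CE DE by blast
  have iCu: "indep (C - {u})" and iDv: "indep (D - {v})" using circuit_minus_indep C D u v by auto
  \<comment> \<open>S is a basis of C \<union> D, so it still spans p\<close>
  have rS: "rk S = card C - 1 + (card D - 1)"
    using skew_subset[OF CE DE sk, of "C - {u}" "D - {v}"] rank_indep[OF iCu] rank_indep[OF iDv] fC fD u v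
    unfolding S_def skew_def by auto
  have "rk (C \<union> D) = card C - 1 + (card D - 1)"
    using sk circuit_rank[OF C] circuit_rank[OF D] unfolding skew_def by simp
  moreover have "rk (insert p S) \<le> rk (insert p (C \<union> D))"
    by (rule rank_mono) (use CE DE pE in \<open>auto simp: S_def\<close>)
  moreover have "rk S \<le> rk (insert p S)" by (rule rank_mono) (use SE pE in auto)
  ultimately have "spans S p" using sp rS unfolding spans_def by simp
  moreover have "p \<notin> S" unfolding S_def using pCD by blast
  ultimately obtain W where W: "circ W" "p \<in> W" "W \<subseteq> insert p S" using circuit_if_spans[OF SE pE] by blast
  have "W \<subseteq> insert p ((C - {u}) \<union> D)" "W \<subseteq> insert p ((D - {v}) \<union> C)"
    using W(3) unfolding S_def by blast+
  moreover have "C \<union> D \<subseteq> E" "D \<union> C \<subseteq> E" using CE DE by blast+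
  ultimately have G: "insert p (essential C D p u \<union> essential D C p v) \<subseteq> W"
    using essential_subset_circuit[OF W(1,2)] W(2) by blast
  have "essential C D p u \<inter> essential D C p v = {}" "p \<notin> essential C D p u \<union> essential D C p v"
    using disj pCD unfolding essential_def by blast+
  moreover have "finite (essential C D p u)" "finite (essential D C p v)"
    using fC fD unfolding essential_def by simp_all
  ultimately have "card (essential C D p u) + card (essential D C p v) + 1 \<le> card W"
    using card_mono[OF circuit_finite[OF W(1)] G] by (simp add: card_Un_disjoint)
  then show ?thesis using gu gv W(1) by (intro exI[of _ W]) simp
qed

definition crossing :: "'a set \<Rightarrow> 'a set \<Rightarrow> 'a set \<Rightarrow> bool" where
  "crossing C D Z \<longleftrightarrow> circ Z \<and> Z \<inter> C \<noteq> {} \<and> Z \<inter> D \<noteq> {}"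

definition min_crossing :: "'a set \<Rightarrow> 'a set \<Rightarrow> 'a set \<Rightarrow> bool" where
  "min_crossing C D Z \<longleftrightarrow>
     crossing C D Z \<and> (\<forall>Z'. crossing C D Z' \<longrightarrow> card (Z - (C \<union> D)) \<le> card (Z' - (C \<union> D)))"

lemma min_crossing_exists: "crossing C D Z \<Longrightarrow> \<exists>Z0. min_crossing C D Z0"
  unfolding min_crossing_def using ex_has_least_nat[of "crossing C D" Z "\<lambda>Z. card (Z - (C \<union> D))"] by blast

lemma min_crossing_commute: "min_crossing C D Z \<Longrightarrow> min_crossing D C Z"
  unfolding min_crossing_def crossing_def by (simp add: Un_commute conj_commute)

lemma min_crossing_outside_nonempty:
  assumes C: "C \<subseteq> E" and D: "D \<subseteq> E" "C \<inter> D = {}" and sk: "skew C D" and Z: "min_crossing C D Z"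
  shows "Z - (C \<union> D) \<noteq> {}"
proof
  assume "Z - (C \<union> D) = {}"
  then have "Z \<subseteq> C \<or> Z \<subseteq> D"
    using circuit_in_skew_union[OF C D sk] Z unfolding min_crossing_def crossing_def by blast
  then show False using Z D(2) unfolding min_crossing_def crossing_def by blast
qed

text \<open>Eliminating p between the crossing circuit and a circuit through p inside insert p C
  would give a crossing circuit with fewer elements outside C \<union> D.\<close>
lemma min_crossing_not_spans:
  assumes C: "circ C" and D: "circ D" and disj: "C \<inter> D = {}"
    and Z0: "min_crossing C D Z0" and p: "p \<in> Z0 - (C \<union> D)"
  shows "\<not> spans C p"
proof
  assume sp: "spans C p"
  have Z0c: "circ Z0" "Z0 \<inter> D \<noteq> {}" using Z0 unfolding min_crossing_def crossing_def by auto
  have CE: "C \<subseteq> E" using circuit_subset_ground[OF C] .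
  have pE: "p \<in> E" using p circuit_subset_ground[OF Z0c(1)] by blast
  obtain Y where Y: "circ Y" "p \<in> Y" "Y \<subseteq> insert p C" using circuit_if_spans[OF CE pE _ sp] p by blast
  obtain z where z: "z \<in> Z0" "z \<in> D" using Z0c(2) by blast
  have zY: "z \<notin> Y" using Y(3) z(2) disj p by blast
  obtain W where W: "circ W" "z \<in> W" "W \<subseteq> (Z0 \<union> Y) - {p}"
    using strong_circuit_elim[OF Z0c(1) Y(1) _ Y(2) z(1) zY] p by blast
  show False
  proof (cases "W \<inter> C = {}")
    case True
    then have "W \<subseteq> Z0" using W(3) Y(3) by blast
    then have "W = Z0" using circuit_subset_eq[OF W(1) Z0c(1)] by blast
    then show False using W(3) p by blast
  next
    case False
    then have "crossing C D W" using W z unfolding crossing_def by blast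
    then have le: "card (Z0 - (C \<union> D)) \<le> card (W - (C \<union> D))" using Z0 unfolding min_crossing_def by blast
    have sub: "W - (C \<union> D) \<subseteq> (Z0 - (C \<union> D)) - {p}" using W(3) Y(3) by blast
    have fin: "finite (Z0 - (C \<union> D))" using circuit_finite[OF Z0c(1)] by simp
    have "card (W - (C \<union> D)) \<le> card ((Z0 - (C \<union> D)) - {p})" using card_mono[OF _ sub] fin by blast
    also have "\<dots> < card (Z0 - (C \<union> D))" using card_Diff1_less[OF fin p] .
    finally show False using le by simp
  qed
qed

lemma min_crossing_not_spans_union:
  assumes C: "circ C" and D: "circ D" and disj: "C \<inter> D = {}"
    and Z0: "min_crossing C D Z0" and two: "2 \<le> card (Z0 - (C \<union> D))" and p: "p \<in> Z0 - (C \<union> D)"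
  shows "\<not> spans (C \<union> D) p"
proof
  assume sp: "spans (C \<union> D) p"
  have CE: "C \<subseteq> E" and DE: "D \<subseteq> E" using circuit_subset_ground C D by auto
  have "circ Z0" using Z0 unfolding min_crossing_def crossing_def by blast
  then have pE: "p \<in> E" using p circuit_subset_ground by blast
  have CDE: "C \<union> D \<subseteq> E" and pCD: "p \<notin> C \<union> D" using CE DE p by auto
  obtain Y where Y: "circ Y" "p \<in> Y" "Y \<subseteq> insert p (C \<union> D)"
    using circuit_if_spans[OF CDE pE pCD sp] by blast
  have nC: "\<not> spans C p" using min_crossing_not_spans[OF C D disj Z0 p] .
  have nD: "\<not> spans D p"
    using min_crossing_not_spans[OF D C _ min_crossing_commute[OF Z0]] disj p by (simp add: Int_commute Un_commute)
  have "Y \<inter> C \<noteq> {}"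
  proof
    assume "Y \<inter> C = {}"
    then have "Y - {p} \<subseteq> D" using Y(3) by blast
    then show False using spans_if_circuit_minus_subset[OF Y(1,2) _ DE] nD by blast
  qed
  moreover have "Y \<inter> D \<noteq> {}"
  proof
    assume "Y \<inter> D = {}"
    then have "Y - {p} \<subseteq> C" using Y(3) by blast
    then show False using spans_if_circuit_minus_subset[OF Y(1,2) _ CE] nC by blast
  qed
  ultimately have "crossing C D Y" using Y(1) unfolding crossing_def by blast
  then have "card (Z0 - (C \<union> D)) \<le> card (Y - (C \<union> D))" using Z0 unfolding min_crossing_def by blast
  moreover have "card (Y - (C \<union> D)) \<le> card {p}" by (rule card_mono) (use Y(3) in auto)
  ultimately show False using two by simp
qed

lemma circuit_contract_lift:
  assumes X: "X \<subseteq> E" "J \<subseteq> X" and W': "circuit (E - X) (contract_indep E indep X J) W'"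
  shows "\<exists>W. circ W \<and> W' \<subseteq> W \<and> W \<subseteq> W' \<union> J"
proof -
  have W'E: "W' \<subseteq> E - X" using W' unfolding circuit_def by blast
  have dep: "\<not> indep (W' \<union> J)" and ind: "\<And>w. w \<in> W' \<Longrightarrow> indep ((W' - {w}) \<union> J)"
    using W' W'E unfolding circuit_def contract_indep_def by blast+
  obtain W where W: "W \<subseteq> W' \<union> J" "circ W" using dep_contains_circuit[OF _ dep] W'E X by blast
  \<comment> \<open>W cannot miss an element w of W', since (W' - {w}) \<union> J is independent\<close>
  have "W' \<subseteq> W" using W circuit_dep indep_subset[OF ind] by blast
  then show ?thesis using W by blast
qed

lemma circuit_contract_if_not_spans:
  assumes Y: "circ Y" and pY: "p \<notin> Y" and pE: "p \<in> E" and ns: "\<not> spans Y p"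
  shows "circuit (E - {p}) (contract_indep E indep {p} {p}) Y"
proof -
  have YE: "Y \<subseteq> E" using circuit_subset_ground[OF Y] .
  have "\<not> indep (Y \<union> {p})" using circuit_dep[OF Y] indep_subset by blast
  moreover have "indep ((Y - {c}) \<union> {p})" if c: "c \<in> Y" for c
  proof -
    have "\<not> spans (Y - {c}) p" using spans_mono[of "Y - {c}" p Y] YE pE ns by blast
    then show ?thesis using indep_insert_if_not_spans[OF circuit_minus_indep[OF Y c] pE] pY by simp
  qed
  ultimately show ?thesis unfolding circuit_def contract_indep_def using YE pY by blast
qed

lemma circuit_contract_remove:
  assumes Z: "circ Z" and p: "p \<in> Z"
  shows "circuit (E - {p}) (contract_indep E indep {p} {p}) (Z - {p})"
proof -
  have "(Z - {p}) \<union> {p} = Z" "\<And>c. c \<in> Z - {p} \<Longrightarrow> ((Z - {p}) - {c}) \<union> {p} = Z - {c}" using p by blast+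
  then show ?thesis
    using circuit_subset_ground[OF Z] circuit_dep[OF Z] circuit_minus_indep[OF Z]
    unfolding circuit_def contract_indep_def by auto
qed

lemma rank_contract_point:
  assumes p: "p \<in> E" "indep {p}" and X: "X \<subseteq> E - {p}" and ns: "\<not> spans X p"
  shows "mrank (contract_indep E indep {p} {p}) X = rk X"
proof -
  have "rk X \<le> rk (insert p X)" "rk (insert p X) \<le> rk X + 1"
    using rank_mono[of X "insert p X"] rank_insert_le[of X p] X p by auto
  then have "rk (X \<union> {p}) = rk X + 1" using ns unfolding spans_def by simp
  then show ?thesis using rank_contract[of "{p}" "{p}" X] p X rank_indep by simp
qed

lemma skew_contract_point:
  assumes CD: "C \<union> D \<subseteq> E" "p \<in> E" "p \<notin> C \<union> D" and ns: "\<not> spans (C \<union> D) p"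
    and sk: "skew C D" and ip: "indep {p}"
  shows "finite_matroid.skew (contract_indep E indep {p} {p}) C D"
proof -
  have M': "finite_matroid (E - {p}) (contract_indep E indep {p} {p})"
    using matroid_contract[of "{p}" "{p}"] CD(2) ip by (simp add: finite_matroid.intro)
  have "mrank (contract_indep E indep {p} {p}) X = rk X" if "X \<subseteq> C \<union> D" for X
    using rank_contract_point[OF CD(2) ip] spans_mono[of X p "C \<union> D"] that CD ns by blast
  then show ?thesis using sk unfolding finite_matroid.skew_def[OF M'] skew_def by simp
qed

lemma contract_point_crossing:
  assumes C: "circ C" and D: "circ D" and sk: "skew C D" and Z0: "crossing C D Z0"
    and p: "p \<in> Z0" "p \<notin> C \<union> D" and nCD: "\<not> spans (C \<union> D) p"
  defines "indep' \<equiv> contract_indep E indep {p} {p}"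
  shows "matroid (E - {p}) indep'" "circuit (E - {p}) indep' C" "circuit (E - {p}) indep' D"
    and "finite_matroid.skew indep' C D" "finite_matroid.crossing (E - {p}) indep' C D (Z0 - {p})"
proof -
  have CDE: "C \<union> D \<subseteq> E" using circuit_subset_ground C D by blast
  have Z0c: "circ Z0" "Z0 \<inter> C \<noteq> {}" "Z0 \<inter> D \<noteq> {}" using Z0 unfolding crossing_def by auto
  have pE: "p \<in> E" using circuit_subset_ground[OF Z0c(1)] p(1) by blast
  have nC: "\<not> spans C p" and nD: "\<not> spans D p" and n0: "\<not> spans {} p"
    using spans_mono[of C p "C \<union> D"] spans_mono[of D p "C \<union> D"] spans_mono[of "{}" p "C \<union> D"]
      CDE pE nCD by blast+
  then have ip: "indep {p}" using indep_insert_if_not_spans[OF indep_empty pE] by simp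
  show m': "matroid (E - {p}) indep'" using matroid_contract[of "{p}" "{p}"] pE ip unfolding indep'_def by blast
  show "circuit (E - {p}) indep' C" "circuit (E - {p}) indep' D"
    using circuit_contract_if_not_spans[OF C _ pE nC] circuit_contract_if_not_spans[OF D _ pE nD] p(2)
    unfolding indep'_def by blast+
  show "finite_matroid.skew indep' C D"
    using skew_contract_point[OF CDE pE p(2) nCD sk ip] unfolding indep'_def .
  have "(Z0 - {p}) \<inter> C \<noteq> {}" "(Z0 - {p}) \<inter> D \<noteq> {}" using Z0c(2,3) p(2) by blast+
  then show "finite_matroid.crossing (E - {p}) indep' C D (Z0 - {p})"
    using circuit_contract_remove[OF Z0c(1) p(1)]
    unfolding indep'_def finite_matroid.crossing_def[OF finite_matroid.intro[OF m'[unfolded indep'_def]]]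
    by simp
qed

end

lemma large_circuit_if_crossing:
  assumes "matroid E indep" "circuit E indep C" "circuit E indep D" "C \<inter> D = {}"
    and "finite_matroid.skew indep C D" and "finite_matroid.crossing E indep C D Z"
  shows "\<exists>W. circuit E indep W \<and> card C + card D + 2 \<le> 2 * card W"
  using assms
proof (induction "card (Z - (C \<union> D))" arbitrary: E indep Z rule: less_induct)
  case less
  interpret finite_matroid E indep using less.prems(1) by (rule finite_matroid.intro)
  note C = less.prems(2) and D = less.prems(3) and disj = less.prems(4) and sk = less.prems(5)
  have CE: "C \<subseteq> E" and DE: "D \<subseteq> E" using circuit_subset_ground C D by auto
  obtain Z0 where Z0: "min_crossing C D Z0" using min_crossing_exists[OF less.prems(6)] by blast
  have Z0c: "circ Z0" "Z0 \<inter> C \<noteq> {}" "Z0 \<inter> D \<noteq> {}" using Z0 unfolding min_crossing_def crossing_def by auto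
  define P0 where "P0 = Z0 - (C \<union> D)"
  have P0_le: "card P0 \<le> card (Z - (C \<union> D))"
    using Z0 less.prems(6) unfolding min_crossing_def P0_def by blast
  have fP0: "finite P0" unfolding P0_def using circuit_finite[OF Z0c(1)] by simp
  have "P0 \<noteq> {}" using min_crossing_outside_nonempty[OF CE DE disj sk Z0] unfolding P0_def .
  then obtain p where p: "p \<in> P0" by blast
  have pZ0: "p \<in> Z0" and pCD: "p \<notin> C \<union> D" using p unfolding P0_def by blast+
  have pE: "p \<in> E" using p circuit_subset_ground[OF Z0c(1)] unfolding P0_def by blast
  have nC: "\<not> spans C p" and nD: "\<not> spans D p"
    using min_crossing_not_spans[OF C D disj Z0] min_crossing_not_spans[OF D C _ min_crossing_commute[OF Z0]]
      disj p unfolding P0_def by (blast, auto simp: Un_commute)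
  show ?case
  proof (cases "card P0 = 1")
    case True
    then have "P0 = {p}" using p card_1_singletonE by blast
    then have "Z0 - {p} \<subseteq> C \<union> D" unfolding P0_def by blast
    moreover have "C \<union> D \<subseteq> E" using CE DE by blast
    ultimately have "spans (C \<union> D) p" using spans_if_circuit_minus_subset[OF Z0c(1) pZ0] by blast
    from large_circuit_if_spanned[OF C D disj sk pE pCD nC nD this] show ?thesis .
  next
    case False
    moreover have "card P0 \<noteq> 0" using \<open>P0 \<noteq> {}\<close> fP0 by simp
    ultimately have two: "2 \<le> card P0" by linarith
    have nCD: "\<not> spans (C \<union> D) p"
      using min_crossing_not_spans_union[OF C D disj Z0 two[unfolded P0_def] p[unfolded P0_def]] .
    let ?indep' = "contract_indep E indep {p} {p}"
    have cross: "crossing C D Z0" using Z0 unfolding min_crossing_def by blast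
    note contracted = contract_point_crossing[OF C D sk cross pZ0 pCD nCD]
    have lt: "card ((Z0 - {p}) - (C \<union> D)) < card (Z - (C \<union> D))"
    proof -
      have "(Z0 - {p}) - (C \<union> D) = P0 - {p}" unfolding P0_def by blast
      then show ?thesis using P0_le card_Diff1_less[OF fP0 p] by simp
    qed
    obtain W' where W': "circuit (E - {p}) ?indep' W'" "card C + card D + 2 \<le> 2 * card W'"
      using less.hyps[OF lt contracted(1-3) disj contracted(4-5)] by blast
    have "{p} \<subseteq> E" using pE by blast
    then obtain W where W: "circ W" "W' \<subseteq> W" using circuit_contract_lift[OF _ order_refl W'(1)] by blast
    then show ?thesis using W'(2) card_mono[OF circuit_finite[OF W(1)] W(2)] by (intro exI[of _ W]) auto
  qed
qed

context finite_matroid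
begin

lemma skew_if_circuit_contract:
  assumes C: "circ C" and J: "J \<subseteq> C" "indep J" "card J = rk C"
    and D: "circuit (E - C) (contract_indep E indep C J) D" "circ D"
  shows "skew C D"
proof -
  have CE: "C \<subseteq> E" using circuit_subset_ground[OF C] .
  have DE: "D \<subseteq> E - C" using D(1) unfolding circuit_def by blast
  obtain d where d: "d \<in> D" using circuit_nonempty[OF D(2)] by blast
  have ind: "indep ((D - {d}) \<union> J)" using D(1) d unfolding circuit_def contract_indep_def by blast
  have "(D - {d}) \<union> J \<subseteq> C \<union> D" "C \<union> D \<subseteq> E" using CE DE J(1) by blast+
  then have "card ((D - {d}) \<union> J) \<le> rk (C \<union> D)" using card_le_rank[OF _ _ ind] by blast
  moreover have "card ((D - {d}) \<union> J) = card D - 1 + card J"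
    using card_Un_disjoint[of "D - {d}" J] circuit_finite[OF D(2)] indep_finite[OF J(2)] DE J(1) d by auto
  moreover have "rk (C \<union> D) \<le> rk C + rk D" using rank_union_le[OF CE] DE by blast
  ultimately show ?thesis using J(3) circuit_rank[OF D(2)] unfolding skew_def by linarith
qed

lemma contract_largest_circuit_smaller:
  assumes conn: "connected"
    and C: "circ C" and Cmax: "\<And>Y. circ Y \<Longrightarrow> card Y \<le> card C"
    and J: "J \<subseteq> C" "indep J" "card J = rk C"
    and D: "circuit (E - C) (contract_indep E indep C J) D"
  shows "card D < card C"
proof -
  have CE: "C \<subseteq> E" using circuit_subset_ground[OF C] .
  have DE: "D \<subseteq> E - C" using D unfolding circuit_def by blast
  obtain D2 where D2: "circ D2" "D \<subseteq> D2" "D2 \<subseteq> D \<union> J" using circuit_contract_lift[OF CE J(1) D] by blast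
  show ?thesis
  proof (cases "D2 = D")
    case False
    then have "D \<subset> D2" using D2(2) by blast
    then have "card D < card D2" using psubset_card_mono[OF circuit_finite[OF D2(1)]] by blast
    moreover have "card D2 \<le> card C" using Cmax D2(1) by blast
    ultimately show ?thesis by simp
  next
    case True
    then have cD: "circ D" using D2(1) by simp
    have sk: "skew C D" using skew_if_circuit_contract[OF C J D cD] .
    obtain d where d: "d \<in> D" using circuit_nonempty[OF cD] by blast
    have "d \<in> E" "C \<inter> D = {}" using d DE by blast+
    obtain Z where "circ Z" "d \<in> Z" "Z \<inter> C \<noteq> {}"
      using connected_circuit_through[OF C conn \<open>d \<in> E\<close>] by blast
    then have "crossing C D Z" unfolding crossing_def using d by blast
    then obtain W where "circ W" "card C + card D + 2 \<le> 2 * card W"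
      using large_circuit_if_crossing[OF matroid C cD \<open>C \<inter> D = {}\<close> sk] by blast
    moreover have "card W \<le> card C" using Cmax \<open>circ W\<close> by blast
    ultimately show ?thesis by simp
  qed
qed

lemma finite_circuit_sizes: "finite {card C | C. circ C}"
  by (rule finite_subset[of _ "card ` Pow E"]) (auto dest: circuit_subset_ground intro: finite_ground)

lemma card_le_max_circuit_size: "circ C \<Longrightarrow> card C \<le> max_circuit_size E indep"
  unfolding max_circuit_size_def using finite_circuit_sizes by (auto intro: Max_ge)

lemma max_circuit_size_attained: "circ C \<Longrightarrow> \<exists>C'. circ C' \<and> card C' = max_circuit_size E indep"
proof -
  assume "circ C"
  then have "max_circuit_size E indep \<in> {card C | C. circ C}"
    unfolding max_circuit_size_def using finite_circuit_sizes by (intro Max_in) auto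
  then show ?thesis by auto
qed

lemma largest_circuit:
  assumes "circ C0"
  obtains C where "circ C" "card C0 \<le> card C" "\<And>Y. circ Y \<Longrightarrow> card Y \<le> card C"
proof -
  obtain C where C: "circ C" "card C = max_circuit_size E indep"
    using max_circuit_size_attained[OF assms] by blast
  show thesis
    by (rule that[OF C(1)]) (use C(2) card_le_max_circuit_size assms in auto)
qed

lemma card_ground_le_1:
  assumes "connected" and small: "\<forall>C. circ C \<longrightarrow> card C \<le> 1"
  shows "card E \<le> 1"
proof (rule ccontr)
  assume "\<not> card E \<le> 1"
  then obtain e e' where e: "e \<in> E" "e' \<in> E" "e \<noteq> e'"
    using finite_ground by (metis One_nat_def card_le_Suc0_iff_eq not_less_eq_eq)
  \<comment> \<open>every circuit is a single loop, so any single element is a separator\<close>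
  have "separator {e}" unfolding separator_def
  proof (intro allI impI)
    fix Y assume Y: "circ Y"
    then obtain y where "Y = {y}"
      using small circuit_nonempty circuit_finite by (metis card_1_singletonE card_0_eq le_neq_implies_less less_one)
    then show "Y \<subseteq> {e} \<or> Y \<subseteq> E - {e}" using circuit_subset_ground[OF Y] by blast
  qed
  moreover have "{e} \<subseteq> E" "{e} \<noteq> {}" "{e} \<noteq> E" using e by auto
  ultimately show False using assms(1) unfolding connected_def by blast
qed

lemma restrict_indep_ground: "restrict_indep indep E = indep"
  unfolding restrict_indep_def using indep_subset_ground by auto

end

lemma restrict_restrict_indep:
  "B \<subseteq> A \<Longrightarrow> restrict_indep (restrict_indep indep A) B = restrict_indep indep B"
  unfolding restrict_indep_def by auto

section \<open>Depth-decompositions by list trees\<close>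

lemma tdist_reaches_root:
  assumes "rooted_tree V root par" and "v \<in> V"
  shows "(par ^^ tdist root par v) v = root"
proof -
  obtain n where "(par ^^ n) v = root" using assms unfolding rooted_tree_def by blast
  then show ?thesis unfolding tdist_def by (rule LeastI)
qed

lemma tdist_least: "m < tdist root par v \<Longrightarrow> (par ^^ m) v \<noteq> root"
  unfolding tdist_def by (rule not_less_Least)

lemma tdist_less_card:
  assumes rt: "rooted_tree V root par" and v: "v \<in> V"
  shows "tdist root par v < card V"
proof -
  define n where "n = tdist root par v"
  have hit: "(par ^^ n) v = root" unfolding n_def using tdist_reaches_root[OF rt v] .
  have inV: "(par ^^ k) v \<in> V" if "k \<le> n" for k
    using that
  proof (induction k)
    case 0
    then show ?case using v by simp
  next
    case (Suc k)
    then have "(par ^^ k) v \<in> V" "(par ^^ k) v \<noteq> root"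
      using tdist_least[of k root par v] unfolding n_def by simp_all
    then show ?case using rt unfolding rooted_tree_def by simp
  qed
  \<comment> \<open>a repetition on the path to the root would let it reach the root in fewer than n steps\<close>
  have "inj_on (\<lambda>k. (par ^^ k) v) {0..n}"
  proof (rule inj_onI, rule ccontr)
    have no_repeat: False if ab: "a < b" "b \<le> n" "(par ^^ a) v = (par ^^ b) v" for a b
    proof -
      have "(par ^^ (n - b + a)) v = (par ^^ (n - b)) ((par ^^ b) v)"
        using ab(3) by (simp add: funpow_add)
      also have "\<dots> = (par ^^ (n - b + b)) v" by (simp add: funpow_add)
      also have "\<dots> = root" using hit ab(2) by simp
      finally have "(par ^^ (n - b + a)) v = root" .
      moreover have "(par ^^ (n - b + a)) v \<noteq> root"
        by (rule tdist_least) (use ab in \<open>simp add: n_def\<close>)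
      ultimately show False by contradiction
    qed
    fix i j assume "i \<in> {0..n}" "j \<in> {0..n}" "(par ^^ i) v = (par ^^ j) v" "i \<noteq> j"
    then show False using no_repeat[of i j] no_repeat[of j i] by (cases "i < j") auto
  qed
  then have "card ((\<lambda>k. (par ^^ k) v) ` {0..n}) = n + 1" by (simp add: card_image)
  moreover have "card ((\<lambda>k. (par ^^ k) v) ` {0..n}) \<le> card V"
    by (rule card_mono) (use rt inV in \<open>auto simp: rooted_tree_def\<close>)
  ultimately show ?thesis unfolding n_def by simp
qed

lemma tdepth_le_tedges:
  assumes "rooted_tree V root par"
  shows "tdepth V root par \<le> tedges V"
  unfolding tdepth_def tedges_def
proof (rule Max.boundedI)
  show "finite (tdist root par ` V)" "tdist root par ` V \<noteq> {}"
    using assms unfolding rooted_tree_def by auto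
  show "\<And>a. a \<in> tdist root par ` V \<Longrightarrow> a \<le> card V - 1"
    using tdist_less_card[OF assms] by fastforce
qed

lemma branch_depth_le_tdepth:
  assumes "depth_decomposition E indep (V :: nat set) root par f"
  shows "branch_depth E indep \<le> tdepth V root par"
proof -
  let ?S = "{tdepth V root par | (V :: nat set) root par f. depth_decomposition E indep V root par f}"
  have "?S \<subseteq> {..mrank indep E}"
    using tdepth_le_tedges unfolding depth_decomposition_def by auto
  then have "finite ?S" by (rule finite_subset) simp
  moreover have "tdepth V root par \<in> ?S" using assms by blast
  ultimately show ?thesis unfolding branch_depth_def by (rule Min_le)
qed

text \<open>Trees with vertex set a set of lists: the root is the empty list and the parent of
  a vertex v is tl v, so the root path of v consists of its suffixes and its depth is
  length v.\<close>
definition list_tree :: "nat list set \<Rightarrow> bool" where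
  "list_tree V \<longleftrightarrow> finite V \<and> [] \<in> V \<and> (\<forall>v\<in>V. tl v \<in> V)"

definition list_tstar :: "('a \<Rightarrow> nat list) \<Rightarrow> 'a set \<Rightarrow> nat list set" where
  "list_tstar f X = {w. \<exists>x\<in>X. suffix w (f x)}"

definition list_decomp ::
  "'a set \<Rightarrow> ('a set \<Rightarrow> bool) \<Rightarrow> nat list set \<Rightarrow> ('a \<Rightarrow> nat list) \<Rightarrow> nat \<Rightarrow> bool" where
  "list_decomp E indep V f d \<longleftrightarrow>
     list_tree V \<and> (\<forall>x\<in>E. f x \<in> V) \<and> mrank indep E = card V - 1 \<and>
     (\<forall>X. X \<subseteq> E \<longrightarrow> mrank indep X \<le> card (list_tstar f X) - 1) \<and> (\<forall>v\<in>V. length v \<le> d)"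

lemma list_decompD:
  assumes "list_decomp E indep V f d"
  shows "list_tree V" "x \<in> E \<Longrightarrow> f x \<in> V" "mrank indep E = card V - 1"
    "X \<subseteq> E \<Longrightarrow> mrank indep X \<le> card (list_tstar f X) - 1" "v \<in> V \<Longrightarrow> length v \<le> d"
  using assms unfolding list_decomp_def by blast+

lemma list_decompI:
  assumes "list_tree V" "\<And>x. x \<in> E \<Longrightarrow> f x \<in> V" "mrank indep E = card V - 1"
    "\<And>X. X \<subseteq> E \<Longrightarrow> mrank indep X \<le> card (list_tstar f X) - 1" "\<And>v. v \<in> V \<Longrightarrow> length v \<le> d"
  shows "list_decomp E indep V f d"
  using assms unfolding list_decomp_def by blast

lemma list_decomp_mono: "list_decomp E indep V f d \<Longrightarrow> d \<le> d' \<Longrightarrow> list_decomp E indep V f d'"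
  unfolding list_decomp_def using le_trans by blast

lemma list_decomp_empty: "indep {} \<Longrightarrow> list_decomp {} indep {[]} f 0"
  unfolding list_decomp_def list_tree_def mrank_def list_tstar_def by simp

lemma suffix_iff_drop: "suffix w v \<longleftrightarrow> (\<exists>k \<le> length v. w = drop k v)"
proof
  assume "suffix w v"
  then obtain u where "v = u @ w" by (auto simp: suffix_def)
  then show "\<exists>k \<le> length v. w = drop k v" by (intro exI[of _ "length u"]) simp
qed (auto simp: suffix_drop)

lemma drop_in_list_tree: "list_tree V \<Longrightarrow> v \<in> V \<Longrightarrow> drop k v \<in> V"
proof (induction k)
  case (Suc k)
  then have "tl (drop k v) \<in> V" unfolding list_tree_def by blast
  then show ?case by (simp add: drop_Suc tl_drop)
qed simp

lemma suffix_in_list_tree: "list_tree V \<Longrightarrow> v \<in> V \<Longrightarrow> suffix w v \<Longrightarrow> w \<in> V"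
  unfolding suffix_iff_drop by (auto intro: drop_in_list_tree)

lemma list_tstar_subset: "list_tree V \<Longrightarrow> \<forall>x\<in>X. f x \<in> V \<Longrightarrow> list_tstar f X \<subseteq> V"
  unfolding list_tstar_def by (auto intro: suffix_in_list_tree)

lemma finite_list_tstar: "list_tree V \<Longrightarrow> \<forall>x\<in>X. f x \<in> V \<Longrightarrow> finite (list_tstar f X)"
  by (rule finite_subset[OF list_tstar_subset]) (auto simp: list_tree_def)

text \<open>Branch-depth uses trees on natural numbers; list trees are transported along to_nat.\<close>
definition tl_code :: "nat \<Rightarrow> nat" where
  "tl_code n = to_nat (tl (from_nat n :: nat list))"

abbreviation nil_code :: nat where "nil_code \<equiv> to_nat ([] :: nat list)"

lemma funpow_tl_code: "(tl_code ^^ k) (to_nat v) = to_nat (drop k (v :: nat list))"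
  by (induction k) (simp_all add: tl_code_def tl_drop drop_Suc)

lemma tdist_tl_code: "tdist nil_code tl_code (to_nat v) = length (v :: nat list)"
  unfolding tdist_def funpow_tl_code
proof (rule Least_equality)
  fix k assume "to_nat (drop k v) = nil_code"
  then show "length v \<le> k" by simp
qed simp

lemma root_path_tl_code:
  "root_path (nil_code) tl_code (to_nat v) = to_nat ` {w. suffix w (v :: nat list)}"
  unfolding root_path_def tdist_tl_code funpow_tl_code suffix_iff_drop by auto

lemma rooted_tree_tl_code:
  assumes "list_tree V"
  shows "rooted_tree (to_nat ` V) (nil_code) tl_code"
  unfolding rooted_tree_def
proof (intro conjI ballI impI)
  show "finite (to_nat ` V)" "nil_code \<in> to_nat ` V" using assms unfolding list_tree_def by auto
next
  fix w assume "w \<in> to_nat ` V"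
  then obtain v where v: "v \<in> V" "w = to_nat v" by blast
  show "tl_code w \<in> to_nat ` V" using v assms unfolding list_tree_def tl_code_def by simp
  show "\<exists>n. (tl_code ^^ n) w = nil_code" using v funpow_tl_code[of "length v" v] by auto
qed

lemma branch_depth_le_list_decomp:
  assumes dec: "list_decomp E indep V f d"
  shows "branch_depth E indep \<le> d"
proof -
  have tree: "list_tree V" using dec unfolding list_decomp_def by blast
  have card_code: "card (to_nat ` S) = card S" for S :: "nat list set"
    by (simp add: card_image)
  have "depth_decomposition E indep (to_nat ` V) (nil_code) tl_code (to_nat \<circ> f)"
    unfolding depth_decomposition_def
  proof (intro conjI allI impI ballI)
    show "rooted_tree (to_nat ` V) (nil_code) tl_code" using rooted_tree_tl_code[OF tree] .
    show "(to_nat \<circ> f) x \<in> to_nat ` V" if "x \<in> E" for x using dec that unfolding list_decomp_def by auto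
    show "mrank indep E = tedges (to_nat ` V)" using dec card_code unfolding list_decomp_def tedges_def by simp
    fix X assume "X \<subseteq> E"
    moreover have "(\<Union>x\<in>X. root_path (nil_code) tl_code ((to_nat \<circ> f) x)) = to_nat ` list_tstar f X"
      unfolding list_tstar_def comp_def root_path_tl_code by auto
    ultimately show "mrank indep X \<le> tstar_edges (nil_code) tl_code (to_nat \<circ> f) X"
      using dec card_code unfolding list_decomp_def tstar_edges_def by simp
  qed
  moreover have "tdepth (to_nat ` V) (nil_code) tl_code \<le> d"
  proof -
    have "tdepth (to_nat ` V) (nil_code) tl_code = Max (length ` V)"
      unfolding tdepth_def image_image tdist_tl_code ..
    also have "\<dots> \<le> d" using dec tree unfolding list_decomp_def list_tree_def by (auto intro!: Max.boundedI)
    finally show ?thesis .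
  qed
  ultimately show ?thesis using branch_depth_le_tdepth order_trans by blast
qed

text \<open>hang k V places the tree V below a new path of k edges leaving the root
  (the old root becomes replicate k 0).\<close>
definition hang :: "nat \<Rightarrow> nat list set \<Rightarrow> nat list set" where
  "hang k V = (\<lambda>v. v @ replicate k 0) ` V \<union> (\<lambda>j. replicate j 0) ` {..<k}"

lemma hang_member: "v \<in> V \<Longrightarrow> v @ replicate k 0 \<in> hang k V"
  unfolding hang_def by blast

lemma card_hang: "finite V \<Longrightarrow> card (hang k V) = card V + k"
proof -
  assume "finite V"
  moreover have "(\<lambda>v. v @ replicate k 0) ` V \<inter> (\<lambda>j. replicate j (0::nat)) ` {..<k} = {}"
    by (auto dest: arg_cong[of _ _ length])
  moreover have "inj (\<lambda>v. v @ replicate k (0::nat))" "inj (\<lambda>j. replicate j (0::nat))"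
    by (auto intro!: injI dest: arg_cong[of _ _ length])
  ultimately show ?thesis
    unfolding hang_def by (simp add: card_Un_disjoint card_image inj_on_subset)
qed

lemma list_tree_hang: "list_tree V \<Longrightarrow> list_tree (hang k V)"
  unfolding list_tree_def
proof (intro conjI ballI)
  assume V: "finite V \<and> [] \<in> V \<and> (\<forall>v\<in>V. tl v \<in> V)"
  have top: "replicate k 0 \<in> hang k V" using V unfolding hang_def by force
  have path: "replicate j 0 \<in> hang k V" if "j \<le> k" for j
    using that top unfolding hang_def by (cases "j = k") auto
  show "finite (hang k V)" using V unfolding hang_def by simp
  show "[] \<in> hang k V" using path[of 0] by simp
  fix w assume "w \<in> hang k V"
  then consider (below) v where "v \<in> V" "w = v @ replicate k 0" | (on_path) j where "j < k" "w = replicate j 0"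
    unfolding hang_def by blast
  then show "tl w \<in> hang k V"
  proof cases
    case below
    show ?thesis
    proof (cases "v = []")
      case True
      then show ?thesis using below path[of "k - 1"] by (simp add: tl_replicate)
    next
      case False
      then have "tl w = tl v @ replicate k 0" using below by simp
      then show ?thesis using below V unfolding hang_def by blast
    qed
  qed (use path in \<open>simp add: tl_replicate\<close>)
qed

lemma length_hang: "\<forall>v\<in>V. length v \<le> d \<Longrightarrow> \<forall>w\<in>hang k V. length w \<le> d + k"
  unfolding hang_def by auto

lemma suffix_replicate_hang: "j \<le> k \<Longrightarrow> suffix (replicate j x) (v @ replicate k x)"
proof -
  assume "j \<le> k"
  then have "v @ replicate k x = (v @ replicate (k - j) x) @ replicate j x"
    by (simp add: replicate_add[symmetric])
  then show ?thesis by (auto simp: suffix_def)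
qed

lemma list_tstar_hang:
  fixes f :: "'a \<Rightarrow> nat list" and X :: "'a set" and k :: nat
  defines "g \<equiv> \<lambda>x. if x \<in> X then replicate k 0 else f x @ replicate k 0"
  assumes "Y \<noteq> {}"
  shows "hang k (insert [] (list_tstar f (Y - X))) \<subseteq> list_tstar g Y"
proof -
  have path: "suffix (replicate j 0) (g x)" if "j \<le> k" for j x
    using suffix_replicate_hang[OF that, of "0::nat" "[]"] suffix_replicate_hang[OF that, of "0::nat" "f x"]
    unfolding g_def by simp
  have "replicate j 0 \<in> list_tstar g Y" if "j \<le> k" for j
    using assms(2) path[OF that] unfolding list_tstar_def by blast
  moreover have "u @ replicate k 0 \<in> list_tstar g Y" if "u \<in> list_tstar f (Y - X)" for u
    using that unfolding list_tstar_def g_def by auto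
  ultimately show ?thesis unfolding hang_def by force
qed

text \<open>glue V1 V2 joins two trees at their roots; even and odd labels keep them apart.\<close>
definition glue :: "nat list set \<Rightarrow> nat list set \<Rightarrow> nat list set" where
  "glue V1 V2 = map (\<lambda>n. 2 * n) ` V1 \<union> map (\<lambda>n. Suc (2 * n)) ` V2"

lemma map_even_eq_map_odd:
  "map (\<lambda>n::nat. 2 * n) v = map (\<lambda>n. Suc (2 * n)) w \<longleftrightarrow> v = [] \<and> w = []"
proof (cases v; cases w)
  fix a b :: nat and v' w' assume "v = a # v'" "w = b # w'"
  moreover have "2 * a \<noteq> 2 * b + 1" by presburger
  ultimately show ?thesis by simp
qed simp_all

lemma inj_map_even: "inj (map (\<lambda>n::nat. 2 * n))" and inj_map_odd: "inj (map (\<lambda>n::nat. Suc (2 * n)))"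
  by (auto intro!: inj_mapI injI)

lemma card_glue:
  assumes "finite V1" "finite V2"
  shows "card V1 + card V2 \<le> card (glue V1 V2) + 1"
    and "card V1 \<le> card (glue V1 V2)" "card V2 \<le> card (glue V1 V2)"
    and "[] \<in> V1 \<Longrightarrow> [] \<in> V2 \<Longrightarrow> card (glue V1 V2) + 1 = card V1 + card V2"
proof -
  let ?A = "map (\<lambda>n. 2 * n) ` V1" and ?B = "map (\<lambda>n. Suc (2 * n)) ` V2"
  have A: "card ?A = card V1" by (rule card_image) (rule inj_on_subset[OF inj_map_even subset_UNIV])
  have B: "card ?B = card V2" by (rule card_image) (rule inj_on_subset[OF inj_map_odd subset_UNIV])
  have AB: "card (glue V1 V2) + card (?A \<inter> ?B) = card V1 + card V2"
    using card_Un_Int[of ?A ?B] assms A B unfolding glue_def by simp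
  have meet: "?A \<inter> ?B \<subseteq> {[]}" by (auto simp: map_even_eq_map_odd)
  then have "card (?A \<inter> ?B) \<le> 1" using card_mono[of "{[]}" "?A \<inter> ?B"] by simp
  then show "card V1 + card V2 \<le> card (glue V1 V2) + 1" using AB by linarith
  have fin: "finite (glue V1 V2)" using assms unfolding glue_def by simp
  show "card V1 \<le> card (glue V1 V2)" using card_mono[OF fin, of ?A] A unfolding glue_def by simp
  show "card V2 \<le> card (glue V1 V2)" using card_mono[OF fin, of ?B] B unfolding glue_def by simp
  assume "[] \<in> V1" "[] \<in> V2"
  then have "[] \<in> ?A" "[] \<in> ?B" using imageI[of "[]" _ "map _"] by simp_all
  then have "?A \<inter> ?B = {[]}" using meet by blast
  then show "card (glue V1 V2) + 1 = card V1 + card V2" using AB by simp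
qed

lemma list_tree_glue: "list_tree V1 \<Longrightarrow> list_tree V2 \<Longrightarrow> list_tree (glue V1 V2)"
  unfolding list_tree_def glue_def by (force simp: map_tl[symmetric])

lemma length_glue: "\<forall>v\<in>V1. length v \<le> d \<Longrightarrow> \<forall>v\<in>V2. length v \<le> d \<Longrightarrow> \<forall>w\<in>glue V1 V2. length w \<le> d"
  unfolding glue_def by auto

lemma suffix_map_iff: "suffix w (map h v) \<longleftrightarrow> (\<exists>u. suffix u v \<and> w = map h u)"
  using suffix_map_rightE map_mono_suffix by blast

lemma list_tstar_glue:
  "list_tstar (\<lambda>x. if x \<in> A then map (\<lambda>n. 2 * n) (f1 x) else map (\<lambda>n. Suc (2 * n)) (f2 x)) Y =
     glue (list_tstar f1 (Y \<inter> A)) (list_tstar f2 (Y - A))"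
  unfolding list_tstar_def glue_def by (auto simp: suffix_map_iff)

context finite_matroid
begin

lemma list_decomp_contract:
  assumes X: "X \<subseteq> E" and J: "J \<subseteq> X" "indep J" "card J = rk X"
    and dec: "list_decomp (E - X) (contract_indep E indep X J) V f d"
  shows "list_decomp E indep (hang (rk X) V)
           (\<lambda>x. if x \<in> X then replicate (rk X) 0 else f x @ replicate (rk X) 0) (d + rk X)"
    (is "list_decomp E indep ?V ?g _")
proof -
  let ?rc = "mrank (contract_indep E indep X J)"
  have tree: "list_tree V" and fV: "\<forall>x\<in>E - X. f x \<in> V"
    and rank_le: "\<And>Z. Z \<subseteq> E - X \<Longrightarrow> ?rc Z \<le> card (list_tstar f Z) - 1"
    using list_decompD[OF dec] by auto
  have fin: "finite V" and nil: "[] \<in> V" using tree unfolding list_tree_def by auto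
  have tree': "list_tree ?V" using list_tree_hang[OF tree] .
  have gV: "\<forall>x\<in>E. ?g x \<in> ?V" using hang_member[OF nil] hang_member fV by auto
  have "?rc (E - X) = card V - 1" using list_decompD(3)[OF dec] .
  moreover have "?rc (E - X) = rk E - rk X" using rank_contract[OF X J, of "E - X"] X by (simp add: Un_absorb2)
  moreover have "rk X \<le> rk E" using rank_mono[OF X] by simp
  moreover have "card V \<ge> 1" using fin nil by (auto simp: Suc_le_eq card_gt_0_iff)
  ultimately have rank_E: "rk E = card ?V - 1" using card_hang[OF fin, of "rk X"] by linarith
  show ?thesis
  proof (rule list_decompI)
    show "list_tree ?V" "\<And>x. x \<in> E \<Longrightarrow> ?g x \<in> ?V" "rk E = card ?V - 1" using tree' gV rank_E by auto
    show "\<And>w. w \<in> ?V \<Longrightarrow> length w \<le> d + rk X" using length_hang list_decompD(5)[OF dec] by blast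
  next
  fix Y assume Y: "Y \<subseteq> E"
  show "rk Y \<le> card (list_tstar ?g Y) - 1"
  proof (cases "Y = {}")
    case True
    then show ?thesis using rank_empty by simp
  next
    case False
    define T where "T = list_tstar f (Y - X)"
    have sub: "Y - X \<subseteq> E - X" using Y by auto
    have fT: "finite T" unfolding T_def by (rule finite_list_tstar[OF tree]) (use fV Y in auto)
    have T_le: "card T \<le> card (insert [] T)" using card_mono[OF finite.insertI[OF fT] subset_insertI] .
    have gY: "\<forall>x\<in>Y. ?g x \<in> ?V" using gV Y by blast
    have hang_le: "card (hang (rk X) (insert [] T)) \<le> card (list_tstar ?g Y)"
      using card_mono[OF finite_list_tstar[OF tree' gY] list_tstar_hang[OF False]] unfolding T_def .
    have "rk Y \<le> rk (Y \<union> X)" using rank_mono Y X by auto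
    also have "\<dots> = ?rc (Y - X) + rk X"
      using rank_contract[OF X J sub] rank_mono[of X "Y \<union> X"] Y X by (simp add: Un_Diff_cancel2)
    also have "\<dots> \<le> (card (insert [] T) - 1) + rk X" using rank_le[OF sub] T_le unfolding T_def by linarith
    also have "\<dots> = card (hang (rk X) (insert [] T)) - 1"
      using card_hang[OF finite.insertI[OF fT]] fT by (simp add: Suc_le_eq card_gt_0_iff)
    also have "\<dots> \<le> card (list_tstar ?g Y) - 1" using hang_le by simp
    finally show ?thesis .
  qed
  qed
qed

lemma list_decomp_path: "\<exists>V f. list_decomp E indep V f (rk E)"
proof -
  obtain J where J: "J \<subseteq> E" "indep J" "card J = rk E" using rank_witness[OF order_refl] by blast
  have "contract_indep E indep E J {}" unfolding contract_indep_def using J by simp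
  then have "list_decomp (E - E) (contract_indep E indep E J) {[]} (\<lambda>_. []) 0"
    using list_decomp_empty by simp
  from list_decomp_contract[OF order_refl J this] show ?thesis unfolding add_0 by blast
qed

lemma list_decomp_separator:
  assumes A: "A \<subseteq> E" "separator A"
    and dec1: "list_decomp A (restrict_indep indep A) V1 f1 d"
    and dec2: "list_decomp (E - A) (restrict_indep indep (E - A)) V2 f2 d"
  shows "list_decomp E indep (glue V1 V2)
           (\<lambda>x. if x \<in> A then map (\<lambda>n. 2 * n) (f1 x) else map (\<lambda>n. Suc (2 * n)) (f2 x)) d"
    (is "list_decomp E indep ?V ?g d")
proof -
  have tree1: "list_tree V1" and tree2: "list_tree V2"
    and fV1: "\<forall>x\<in>A. f1 x \<in> V1" and fV2: "\<forall>x\<in>E - A. f2 x \<in> V2"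
    using list_decompD(1,2)[OF dec1] list_decompD(1,2)[OF dec2] by auto
  have fin: "finite V1" "finite V2" "[] \<in> V1" "[] \<in> V2" using tree1 tree2 unfolding list_tree_def by auto
  have gV: "\<forall>x\<in>E. ?g x \<in> ?V" using fV1 fV2 unfolding glue_def by auto
  have "rk A = card V1 - 1" "rk (E - A) = card V2 - 1"
    using list_decompD(3)[OF dec1] list_decompD(3)[OF dec2] rank_restrict[of A A]
      rank_restrict[of "E - A" "E - A"] by auto
  moreover have "card V1 \<ge> 1" "card V2 \<ge> 1" using fin by (auto simp: Suc_le_eq card_gt_0_iff)
  ultimately have rank_E: "rk E = card ?V - 1"
    using rank_separator[OF A] card_glue(4)[OF fin] by linarith
  show ?thesis
  proof (rule list_decompI)
    show "list_tree ?V" "\<And>x. x \<in> E \<Longrightarrow> ?g x \<in> ?V" "rk E = card ?V - 1"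
      using list_tree_glue[OF tree1 tree2] gV rank_E by auto
    show "\<And>w. w \<in> ?V \<Longrightarrow> length w \<le> d"
      using length_glue list_decompD(5)[OF dec1] list_decompD(5)[OF dec2] by blast
  next
  fix Y assume Y: "Y \<subseteq> E"
  show "rk Y \<le> card (list_tstar ?g Y) - 1"
  proof -
    let ?T1 = "list_tstar f1 (Y \<inter> A)" and ?T2 = "list_tstar f2 (Y - A)"
    have sub: "Y \<inter> A \<subseteq> A" "Y - A \<subseteq> E - A" "\<forall>x\<in>Y \<inter> A. f1 x \<in> V1" "\<forall>x\<in>Y - A. f2 x \<in> V2"
      using Y fV1 fV2 by auto
    have fT: "finite ?T1" "finite ?T2"
      using finite_list_tstar[OF tree1 sub(3)] finite_list_tstar[OF tree2 sub(4)] .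
    have "rk (Y \<inter> A) \<le> card ?T1 - 1" "rk (Y - A) \<le> card ?T2 - 1"
      using list_decompD(4)[OF dec1 sub(1)] list_decompD(4)[OF dec2 sub(2)]
        rank_restrict[OF sub(1)] rank_restrict[OF sub(2)] by simp_all
    moreover have "rk Y \<le> rk (Y \<inter> A) + rk (Y - A)"
    proof -
      have "Y \<inter> A \<subseteq> E" "Y - A \<subseteq> E" using Y by auto
      from rank_union_le[OF this] show ?thesis by (simp add: Int_Diff_Un)
    qed
    moreover have "card ?T1 + card ?T2 \<le> card (glue ?T1 ?T2) + 1"
      "card ?T1 \<le> card (glue ?T1 ?T2)" "card ?T2 \<le> card (glue ?T1 ?T2)"
      using card_glue[OF fT] by auto
    ultimately show ?thesis unfolding list_tstar_glue by linarith
  qed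
  qed
qed

end

lemma list_decomp_from_connected:
  assumes "matroid E indep"
    and "\<And>A. A \<subseteq> E \<Longrightarrow> A \<noteq> {} \<Longrightarrow> finite_matroid.connected A (restrict_indep indep A) \<Longrightarrow>
           \<exists>V f. list_decomp A (restrict_indep indep A) V f d"
  shows "\<exists>V f. list_decomp E indep V f d"
  using assms
proof (induction "card E" arbitrary: E indep rule: less_induct)
  case less
  interpret finite_matroid E indep using less.prems(1) by (rule finite_matroid.intro)
  consider "E = {}" | "E \<noteq> {}" "connected"
    | A where "A \<subseteq> E" "A \<noteq> {}" "A \<noteq> E" "separator A"
    unfolding connected_def by blast
  then show ?case
  proof cases
    case 1
    then show ?thesis using list_decomp_empty[of indep, OF indep_empty] list_decomp_mono by blast
  next
    case 2
    then show ?thesis using less.prems(2)[of E] restrict_indep_ground by simp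
  next
    case (3 A)
    have side: "\<exists>V f. list_decomp B (restrict_indep indep B) V f d" if B: "B \<subseteq> E" "B \<noteq> E" for B
    proof (rule less.hyps)
      show "card B < card E" using B finite_ground by (simp add: psubset_card_mono)
      show "matroid B (restrict_indep indep B)" using matroid_restrict[OF B(1)] .
      fix A' assume "A' \<subseteq> B" "A' \<noteq> {}" "finite_matroid.connected A' (restrict_indep (restrict_indep indep B) A')"
      then show "\<exists>V f. list_decomp A' (restrict_indep (restrict_indep indep B) A') V f d"
        using less.prems(2)[of A'] B restrict_restrict_indep[of A' B indep] by auto
    qed
    have "E - A \<subseteq> E" "E - A \<noteq> E" using 3 by blast+
    then obtain V1 f1 V2 f2 where "list_decomp A (restrict_indep indep A) V1 f1 d"
      "list_decomp (E - A) (restrict_indep indep (E - A)) V2 f2 d"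
      using side[of A] side[of "E - A"] 3 by meson
    from list_decomp_separator[OF 3(1) 3(4) this] show ?thesis by blast
  qed
qed

lemma square_diff_one: "(1::nat) \<le> l \<Longrightarrow> (l - 1)^2 + (l - 1) \<le> l^2"
proof -
  assume "1 \<le> l"
  then obtain m where "l = Suc m" by (cases l) auto
  thus ?thesis by (simp add: power2_eq_square)
qed

lemma list_decomp_circuit_bound:
  assumes "matroid E indep" "1 \<le> l" "\<forall>C. circuit E indep C \<longrightarrow> card C \<le> l"
  shows "\<exists>V f. list_decomp E indep V f (l\<^sup>2)"
  using assms
proof (induction l arbitrary: E indep rule: less_induct)
  case (less l)
  interpret finite_matroid E indep using less.prems(1) by (rule finite_matroid.intro)
  show ?case
  proof (rule list_decomp_from_connected[OF less.prems(1)])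
    fix A assume A: "A \<subseteq> E" "A \<noteq> {}" and conn: "finite_matroid.connected A (restrict_indep indep A)"
    interpret M: finite_matroid A "restrict_indep indep A"
      using matroid_restrict[OF A(1)] by unfold_locales
    have small: "\<forall>C. M.circ C \<longrightarrow> card C \<le> l" using circuit_restrict[OF A(1)] less.prems(3) by blast
    show "\<exists>V f. list_decomp A (restrict_indep indep A) V f (l\<^sup>2)"
    proof (cases "\<exists>C. M.circ C \<and> 2 \<le> card C")
      case True
      then obtain C0 where C0: "M.circ C0" "2 \<le> card C0" by blast
      obtain C where C: "M.circ C" "card C0 \<le> card C" and largest: "\<And>Y. M.circ Y \<Longrightarrow> card Y \<le> card C"
        using M.largest_circuit[OF C0(1)] by blast
      have "2 \<le> card C" "card C \<le> l" using C C0(2) small by auto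
      have CA: "C \<subseteq> A" using M.circuit_subset_ground[OF C(1)] .
      obtain J where J: "J \<subseteq> C" "restrict_indep indep A J" "card J = M.rk C"
        using M.rank_witness[OF CA] by blast
      let ?N = "contract_indep A (restrict_indep indep A) C J"
      have "card D \<le> l - 1" if "circuit (A - C) ?N D" for D
        using M.contract_largest_circuit_smaller[OF conn C(1) largest J that]
          \<open>card C \<le> l\<close> by linarith
      then obtain V f where "list_decomp (A - C) ?N V f ((l - 1)\<^sup>2)"
        using less.IH[of "l - 1"] M.matroid_contract[OF CA J(1,2)] \<open>2 \<le> card C\<close> \<open>card C \<le> l\<close> by force
      from M.list_decomp_contract[OF CA J this]
      have "\<exists>V f. list_decomp A (restrict_indep indep A) V f ((l - 1)\<^sup>2 + M.rk C)" by blast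
      moreover have "(l - 1)\<^sup>2 + M.rk C \<le> l\<^sup>2"
        using M.circuit_rank[OF C(1)] square_diff_one[OF less.prems(2)] \<open>card C \<le> l\<close> by simp
      ultimately show ?thesis using list_decomp_mono by blast
    next
      case False
      then have "card A \<le> 1" using M.card_ground_le_1 conn by fastforce
      moreover have "M.rk A \<le> card A" using M.rank_le_card by simp
      moreover have "1 \<le> l\<^sup>2" using less.prems(2) by (simp add: Suc_le_eq)
      moreover obtain V f where "list_decomp A (restrict_indep indep A) V f (M.rk A)"
        using M.list_decomp_path by blast
      ultimately show ?thesis using list_decomp_mono[of A _ V f "M.rk A" "l\<^sup>2"] by auto
    qed
  qed
qed

theorem mainTheorem16:
  fixes E :: "'a set" and indep :: "'a set \<Rightarrow> bool"
  assumes "matroid E indep"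
    and "\<exists>C. circuit E indep C"
  shows "branch_depth E indep \<le> (max_circuit_size E indep)\<^sup>2"
proof -
  interpret finite_matroid E indep using assms(1) by (rule finite_matroid.intro)
  have "1 \<le> max_circuit_size E indep"
    using assms(2) card_le_max_circuit_size card_circuit_ge_1 order_trans by blast
  then obtain V f where "list_decomp E indep V f ((max_circuit_size E indep)\<^sup>2)"
    using list_decomp_circuit_bound[OF assms(1)] card_le_max_circuit_size by blast
  then show ?thesis by (rule branch_depth_le_list_decomp)
qed

end
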